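(* Fix a node $p$ with $N_p\ge 1$ neighbors, integers $d\ge1$, $B_p\ge1$, constants $C^R>0$, $\rho>0$, $\eta>0$, a privacy parameter $\alpha>0$, and fixed vectors $\lambda\in\mathbb{R}^d$, $f_p(t)\in\mathbb{R}^d$ and $f_i(t)\in\mathbb{R}^d$ for $i\in\mathcal{N}_p$ (these do not depend on the dataset). Given a dataset $D_p=((x_j,y_j))_{j=1}^{B_p}$, the dual variable perturbation step is: (i) set $\hat\alpha=\alpha-2\ln\!\Big(1+\frac{c_1C^R}{B_p(\rho+2\eta N_p)}\Big)$; if $\hat\alpha>0$ set $\Phi=0$; otherwise set $\Phi=\frac{c_1C^R}{B_p(e^{\alpha/4}-1)}-\rho-2\eta N_p$ and redefine $\hat\alpha=\alpha/2$; (ii) draw $\epsilon\in\mathbb{R}^d$ with density proportional to $e^{-(\hat\alpha/2)\|\epsilon\|}$ and set $\mu=\lambda+\frac{C^R}{2B_p}\epsilon$; (iii) output $$f_p(t+1)=\arg\min_{f\in\mathbb{R}^d}\ \frac{C^R}{B_p}\sum_{j=1}^{B_p}\mathcal{L}(y_jf^Tx_j)+\rho R(f)+2\mu^Tf+\frac{\Phi}{2}\|f\|^2+\eta\sum_{i\in\mathcal{N}_p}\Big\|f-\tfrac12\big(f_p(t)+f_i(t)\big)\Big\|^2 .$$ Then for any two neighboring datasets $D_p,D_p'$, the output $f_p(t+1)$ has a density under each, denoted $Q(\cdot\mid D_p)$ and $Q(\cdot\mid D_p')$, and for every $f\in\mathbb{R}^d$, $$\frac{Q(f\mid D_p)}{Q(f\mid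 D_p')}\le e^{\alpha}.$$
   Context: Data points satisfy $x_j\in\mathbb{R}^d$ with $\|x_j\|\le 1$ (Euclidean norm) and $y_j\in\{-1,1\}$. The loss $\mathcal{L}:\mathbb{R}\to\mathbb{R}$ is strictly convex and twice continuously differentiable with $|\mathcal{L}'|\le 1$ and $|\mathcal{L}''|\le c_1$ for a constant $c_1>0$. The regularizer $R:\mathbb{R}^d\to\mathbb{R}$ is twice continuously differentiable and 1-strongly convex. Two datasets of the same size $B_p$ are neighboring if they differ in exactly one data point. $\|\cdot\|$ is the Euclidean norm. *)

theory Defs
  imports "HOL-Analysis.Analysis"
begin

definition strictly_convex :: "(real \<Rightarrow> real) \<Rightarrow> bool" where
  "strictly_convex L \<longleftrightarrow>
     (\<forall>x y t. x \<noteq> y \<longrightarrow> 0 < t \<longrightarrow> t < 1 \<longrightarrow>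
        L ((1 - t) * x + t * y) < (1 - t) * L x + t * L y)"

definition strongly_convex :: "real \<Rightarrow> ('d::real_normed_vector \<Rightarrow> real) \<Rightarrow> bool" where
  "strongly_convex m R \<longleftrightarrow>
     (\<forall>x y t. 0 \<le> t \<longrightarrow> t \<le> 1 \<longrightarrow>
        R ((1 - t) *\<^sub>R x + t *\<^sub>R y)
          \<le> (1 - t) * R x + t * R y - (m / 2) * t * (1 - t) * (norm (x - y))\<^sup>2)"

definition C2_real :: "(real \<Rightarrow> real) \<Rightarrow> bool" where
  "C2_real L \<longleftrightarrow> (\<exists>L1 L2. (\<forall>t. (L has_real_derivative L1 t) (at t))
      \<and> (\<forall>t. (L1 has_real_derivative L2 t) (at t)) \<and> continuous_on UNIV L2)"

definition C2_fun :: "('d::euclidean_space \<Rightarrow> real) \<Rightarrow> bool" where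
  "C2_fun R \<longleftrightarrow> (\<exists>(D1::'d \<Rightarrow> ('d \<Rightarrow>\<^sub>L real)) (D2::'d \<Rightarrow> ('d \<Rightarrow>\<^sub>L ('d \<Rightarrow>\<^sub>L real))).
      (\<forall>x. (R has_derivative blinfun_apply (D1 x)) (at x))
    \<and> (\<forall>x. (D1 has_derivative blinfun_apply (D2 x)) (at x))
    \<and> continuous_on UNIV D2)"

definition alpha_hat0 :: "real \<Rightarrow> real \<Rightarrow> real \<Rightarrow> nat \<Rightarrow> real \<Rightarrow> real \<Rightarrow> nat \<Rightarrow> real" where
  "alpha_hat0 \<alpha> c1 CR B \<rho> \<eta> N =
     \<alpha> - 2 * ln (1 + c1 * CR / (real B * (\<rho> + 2 * \<eta> * real N)))"

definition alpha_hat :: "real \<Rightarrow> real \<Rightarrow> real \<Rightarrow> nat \<Rightarrow> real \<Rightarrow> real \<Rightarrow> nat \<Rightarrow> real" where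
  "alpha_hat \<alpha> c1 CR B \<rho> \<eta> N =
     (if alpha_hat0 \<alpha> c1 CR B \<rho> \<eta> N > 0 then alpha_hat0 \<alpha> c1 CR B \<rho> \<eta> N else \<alpha> / 2)"

definition Phi :: "real \<Rightarrow> real \<Rightarrow> real \<Rightarrow> nat \<Rightarrow> real \<Rightarrow> real \<Rightarrow> nat \<Rightarrow> real" where
  "Phi \<alpha> c1 CR B \<rho> \<eta> N =
     (if alpha_hat0 \<alpha> c1 CR B \<rho> \<eta> N > 0 then 0
      else c1 * CR / (real B * (exp (\<alpha> / 4) - 1)) - \<rho> - 2 * \<eta> * real N)"

definition noise_measure :: "real \<Rightarrow> 'd::euclidean_space measure" where
  "noise_measure a =
     density lborel (\<lambda>e. ennreal (exp (- (a / 2) * norm e)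
        / (\<integral>(u::'d). exp (- (a / 2) * norm u) \<partial>lborel)))"

definition objective ::
  "(real \<Rightarrow> real) \<Rightarrow> ('d::euclidean_space \<Rightarrow> real) \<Rightarrow> real \<Rightarrow> nat \<Rightarrow> real \<Rightarrow> real \<Rightarrow> real
   \<Rightarrow> 'n set \<Rightarrow> 'd \<Rightarrow> ('n \<Rightarrow> 'd) \<Rightarrow> (nat \<Rightarrow> 'd) \<Rightarrow> (nat \<Rightarrow> real) \<Rightarrow> 'd \<Rightarrow> 'd \<Rightarrow> real" where
  "objective L R CR B \<rho> \<eta> \<Phi> Np fp fn x y \<mu> f =
     CR / real B * (\<Sum>j<B. L (y j * (f \<bullet> x j))) + \<rho> * R f + 2 * (\<mu> \<bullet> f)
     + \<Phi> / 2 * (norm f)\<^sup>2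
     + \<eta> * (\<Sum>i\<in>Np. (norm (f - (1/2) *\<^sub>R (fp + fn i)))\<^sup>2)"

definition mechanism_output ::
  "(real \<Rightarrow> real) \<Rightarrow> ('d::euclidean_space \<Rightarrow> real) \<Rightarrow> real \<Rightarrow> real \<Rightarrow> real \<Rightarrow> nat \<Rightarrow> real \<Rightarrow> real
   \<Rightarrow> 'n set \<Rightarrow> 'd \<Rightarrow> 'd \<Rightarrow> ('n \<Rightarrow> 'd) \<Rightarrow> (nat \<Rightarrow> 'd) \<Rightarrow> (nat \<Rightarrow> real) \<Rightarrow> 'd \<Rightarrow> 'd" where
  "mechanism_output L R c1 \<alpha> CR B \<rho> \<eta> Np lam fp fn x y \<epsilon> =
     (let \<Phi> = Phi \<alpha> c1 CR B \<rho> \<eta> (card Np);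
          \<mu> = lam + (CR / (2 * real B)) *\<^sub>R \<epsilon>
      in arg_min (objective L R CR B \<rho> \<eta> \<Phi> Np fp fn x y \<mu>) (\<lambda>_. True))"

definition output_distribution ::
  "(real \<Rightarrow> real) \<Rightarrow> ('d::euclidean_space \<Rightarrow> real) \<Rightarrow> real \<Rightarrow> real \<Rightarrow> real \<Rightarrow> nat \<Rightarrow> real \<Rightarrow> real
   \<Rightarrow> 'n set \<Rightarrow> 'd \<Rightarrow> 'd \<Rightarrow> ('n \<Rightarrow> 'd) \<Rightarrow> (nat \<Rightarrow> 'd) \<Rightarrow> (nat \<Rightarrow> real) \<Rightarrow> 'd measure" where
  "output_distribution L R c1 \<alpha> CR B \<rho> \<eta> Np lam fp fn x y =
     distr (noise_measure (alpha_hat \<alpha> c1 CR B \<rho> \<eta> (card Np))) lborel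
       (mechanism_output L R c1 \<alpha> CR B \<rho> \<eta> Np lam fp fn x y)"

definition neighboring :: "nat \<Rightarrow> (nat \<Rightarrow> 'd) \<Rightarrow> (nat \<Rightarrow> real) \<Rightarrow> (nat \<Rightarrow> 'd) \<Rightarrow> (nat \<Rightarrow> real) \<Rightarrow> bool" where
  "neighboring B x y x' y' \<longleftrightarrow> card {j. j < B \<and> (x j, y j) \<noteq> (x' j, y' j)} = 1"

end

theory Submission
  imports Defs
begin

text \<open>
  By the first-order optimality condition the output f and the noise \<epsilon> determine each other:
  \<epsilon> = noise_of f, where noise_of f is -B/CR times the gradient at f of the objective without
  noise. Strong convexity with modulus \<kappa> = \<rho> + \<Phi> + 2\<eta>N makes noise_of injective with a positive
  definite derivative, so by change of variables the output has density
  \<nu>(noise_of f) \<bar>det noise_of'(f)\<bar>, \<nu> the noise density.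
  For neighbouring data sets noise_of changes by at most 2 in norm (as \<bar>L'\<bar> \<le> 1 and \<parallel>x\<parallel> \<le> 1),
  so the \<nu>-factors differ by a factor at most exp alpha_hat; and noise_of' changes by a single
  rank-one term of size at most c1, so by the matrix determinant lemma the Jacobians differ by
  a factor at most 1 + c1CR/(B\<kappa>). The choice of alpha_hat and \<Phi> makes the product at most
  exp \<alpha>.
\<close>

section \<open>Rank-one updates of determinants\<close>

lemma det_add_row_multiples:
  fixes M :: "real^'n^'n"
  assumes "finite T" "z \<notin> T"
  shows "det (\<chi> i. if i = z then u else if i \<in> T then row i M + c i *s u else row i M)
       = det (\<chi> i. if i = z then u else row i M)"
  using assms
proof (induction T rule: finite_induct)
  case empty
  show ?case by (rule arg_cong[where f=det]) (simp add: vec_eq_iff)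
next
  case (insert t T)
  let ?A = "(\<chi> i. if i = z then u else if i \<in> insert t T then row i M + c i *s u else row i M) :: real^'n^'n"
  have tz: "t \<noteq> z" using insert by auto
  have "det ?A = det (\<chi> k. if k = t then row t ?A + (- c t) *s row z ?A else row k ?A)"
    by (rule det_row_operation[symmetric]) (rule tz)
  also have "(\<chi> k. if k = t then row t ?A + (- c t) *s row z ?A else row k ?A)
      = (\<chi> i. if i = z then u else if i \<in> T then row i M + c i *s u else row i M)"
    using tz insert.hyps by (auto simp: vec_eq_iff row_def algebra_simps)
  also have "det \<dots> = det (\<chi> i. if i = z then u else row i M)"
    using insert by simp
  finally show ?case .
qed

lemma det_rank_one_update_rows:
  fixes M :: "real^'n^'n" and u x :: "real^'n"
  assumes u: "u = sum (\<lambda>i. x$i *s row i M) UNIV" and T: "finite T"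
  shows "det (\<chi> i. if i \<in> T then row i M + (a * u$i) *s u else row i M)
     = det M * (1 + a * (\<Sum>i\<in>T. u$i * x$i))"
  using T
proof (induction T rule: finite_induct)
  case empty
  have "(\<chi> i. row i M) = M" by (simp add: vec_eq_iff row_def)
  then show ?case by simp
next
  case (insert z T)
  let ?c = "\<lambda>i. if i \<in> T then row i M + (a * u$i) *s u else row i M"
  have "det (\<chi> i. if i \<in> insert z T then row i M + (a * u$i) *s u else row i M)
      = det (\<chi> i. if i = z then row i M + (a * u$i) *s u else ?c i)"
    by (rule arg_cong[where f=det]) (auto simp: vec_eq_iff)
  also have "\<dots> = det (\<chi> i. if i = z then row i M else ?c i) + det (\<chi> i. if i = z then (a * u$i) *s u else ?c i)"
    by (rule det_row_add)
  also have "det (\<chi> i. if i = z then row i M else ?c i) = det (\<chi> i. ?c i)"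
    by (rule arg_cong[where f=det]) (use insert in \<open>auto simp: vec_eq_iff\<close>)
  also have "det (\<chi> i. ?c i) = det M * (1 + a * (\<Sum>i\<in>T. u$i * x$i))"
    using insert by simp
  also have "det (\<chi> i. if i = z then (a * u$i) *s u else ?c i)
      = det (\<chi> i. if i = z then (a * u$z) *s u else ?c i)"
    by (rule arg_cong[where f=det]) (auto simp: vec_eq_iff)
  also have "\<dots> = (a * u$z) * det (\<chi> i. if i = z then u else ?c i)"
    by (rule det_row_mul)
  also have "det (\<chi> i. if i = z then u else ?c i) = det (\<chi> i. if i = z then u else row i M)"
    using det_add_row_multiples[OF insert(1,2), of u M "\<lambda>i. a * u$i"] by simp
  also have "det (\<chi> i. if i = z then u else row i M) = x$z * det M"
    using cramer_lemma_transpose[of z x M] u by metis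
  finally show ?case
    using insert by (simp add: algebra_simps)
qed

lemma det_rank_one_update:
  fixes M :: "real^'n^'n" and u x :: "real^'n"
  assumes ux: "transpose M *v x = u"
  shows "det (M + a *\<^sub>R (\<chi> i j. u$i * u$j)) = det M * (1 + a * (u \<bullet> x))"
proof -
  have u: "u = sum (\<lambda>i. x$i *s row i M) UNIV"
    using ux by (simp add: vec_eq_iff matrix_vector_mult_def transpose_def row_def sum_component mult.commute)
  have "M + a *\<^sub>R (\<chi> i j. u$i * u$j) = (\<chi> i. if i \<in> UNIV then row i M + (a * u$i) *s u else row i M)"
    by (simp add: vec_eq_iff row_def)
  then show ?thesis
    using det_rank_one_update_rows[OF u, of UNIV a] by (simp add: inner_vec_def)
qed

lemma det_scaleR: "det (c *\<^sub>R (A::real^'n^'n)) = c ^ CARD('n) * det A"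
proof -
  have "c *\<^sub>R A = (\<chi> i. c *s row i A)" by (simp add: vec_eq_iff row_def)
  then show ?thesis using det_rows_mul[of "\<lambda>_. c" "\<lambda>i. row i A"]
    by (simp add: prod_constant row_def)
qed

lemma det_nonzero_if_coercive:
  fixes M :: "real^'n^'n"
  assumes coercive: "\<And>x. lam * (norm x)\<^sup>2 \<le> x \<bullet> (M *v x)" and lam: "lam > 0"
  shows "det M \<noteq> 0"
proof -
  have "inj ((*v) M)"
  proof (rule inj_onI)
    fix v w assume "M *v v = M *v w"
    then have "M *v (v - w) = 0" by (simp add: matrix_vector_mult_diff_distrib)
    then have "lam * (norm (v - w))\<^sup>2 \<le> 0" using coercive[of "v - w"] by simp
    then show "v = w" using lam by (simp add: mult_le_0_iff)
  qed
  then show ?thesis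
    using det_nz_iff_inj[OF matrix_vector_mul_linear[of M]] by simp
qed

lemma det_rank_one_update_coercive:
  fixes M :: "real^'n^'n" and u :: "real^'n"
  assumes coercive: "\<And>x. lam * (norm x)\<^sup>2 \<le> x \<bullet> (M *v x)" and lam: "lam > 0"
  obtains s where "0 \<le> s" "s \<le> (norm u)\<^sup>2 / lam"
    "\<And>a. det (M + a *\<^sub>R (\<chi> i j. u$i * u$j)) = det M * (1 + a * s)"
proof -
  have "det (transpose M) \<noteq> 0" using det_nonzero_if_coercive[OF coercive lam] by simp
  then obtain N where N: "transpose M ** N = mat 1"
    using invertible_det_nz[of "transpose M"] unfolding invertible_def by blast
  define x where "x = N *v u"
  have tx: "transpose M *v x = u" unfolding x_def
    by (metis matrix_vector_mul_assoc N matrix_vector_mul_lid)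
  have "u \<bullet> x = x \<bullet> (M *v x)"
    using tx dot_lmul_matrix[of x M x] by (simp add: inner_commute)
  then have lb: "lam * (norm x)\<^sup>2 \<le> u \<bullet> x" using coercive[of x] by simp
  have cs: "u \<bullet> x \<le> norm u * norm x" by (rule norm_cauchy_schwarz)
  with lb have "lam * (norm x)\<^sup>2 \<le> norm u * norm x" by linarith
  then have "lam * norm x \<le> norm u"
    by (cases "norm x = 0") (auto simp: power2_eq_square mult.assoc[symmetric] intro: mult_right_le_imp_le)
  then have "norm u * norm x \<le> norm u * (norm u / lam)"
    using lam by (intro mult_left_mono) (auto simp: field_simps)
  with cs have "u \<bullet> x \<le> (norm u)\<^sup>2 / lam" by (simp add: power2_eq_square)
  moreover have "0 \<le> u \<bullet> x" using lb lam by (meson order_trans mult_nonneg_nonneg less_imp_le zero_le_power2)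
  ultimately show ?thesis using that det_rank_one_update[OF tx] by blast
qed

lemma det_rank_one_update_le:
  fixes M :: "real^'n^'n" and u :: "real^'n"
  assumes coercive: "\<And>x. lam * (norm x)\<^sup>2 \<le> x \<bullet> (M *v x)" and lam: "lam > 0"
    and a: "0 \<le> a" "a \<le> amax" and u: "norm u \<le> 1"
  shows "\<bar>det (M + a *\<^sub>R (\<chi> i j. u$i * u$j))\<bar> \<le> (1 + amax / lam) * \<bar>det M\<bar>"
proof -
  obtain s where s: "0 \<le> s" "s \<le> (norm u)\<^sup>2 / lam"
      "det (M + a *\<^sub>R (\<chi> i j. u$i * u$j)) = det M * (1 + a * s)"
    using det_rank_one_update_coercive[OF coercive lam] by metis
  have "(norm u)\<^sup>2 \<le> 1" using u norm_ge_zero by (metis power_le_one one_power2)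
  then have "s \<le> 1 / lam" using s(2) lam by (meson divide_right_mono less_imp_le order_trans)
  then have "a * s \<le> amax * (1 / lam)"
    using a s(1) lam by (intro mult_mono) auto
  then have "0 \<le> 1 + a * s" "1 + a * s \<le> 1 + amax / lam"
    using a s(1) by auto
  then show ?thesis
    unfolding s(3) by (simp add: abs_mult mult.commute mult_left_mono)
qed

lemma det_rank_one_update_ge:
  fixes M :: "real^'n^'n" and u :: "real^'n"
  assumes coercive: "\<And>x. lam * (norm x)\<^sup>2 \<le> x \<bullet> (M *v x)" and lam: "lam > 0" and a: "0 \<le> a"
  shows "\<bar>det M\<bar> \<le> \<bar>det (M + a *\<^sub>R (\<chi> i j. u$i * u$j))\<bar>"
proof -
  obtain s where s: "0 \<le> s" "det (M + a *\<^sub>R (\<chi> i j. u$i * u$j)) = det M * (1 + a * s)"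
    using det_rank_one_update_coercive[OF coercive lam] by metis
  have "\<bar>det M\<bar> * 1 \<le> \<bar>det M\<bar> * (1 + a * s)"
    using a s(1) by (intro mult_left_mono) auto
  then show ?thesis unfolding s(2) using a s(1) by (simp add: abs_mult)
qed

section \<open>Coordinates on a Euclidean space\<close>

text \<open>
  The change of variables theorem of the library is stated on \<open>real^'n\<close> with
  \<open>'n::{finite,wellorder}\<close>; indexing coordinates by the basis of \<open>'a\<close> transfers it to an
  arbitrary Euclidean space \<open>'a\<close>.
\<close>
typedef (overloaded) ('a::euclidean_space) basis_index = "Basis :: 'a set"
  morphisms basis_vec Abs_basis_index
  using nonempty_Basis by blast

lemma finite_UNIV_basis_index: "finite (UNIV :: 'a::euclidean_space basis_index set)"
proof -
  have "(UNIV :: 'a basis_index set) = Abs_basis_index ` Basis"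
    using type_definition.univ[OF type_definition_basis_index] .
  then show ?thesis by (metis finite_Basis finite_imageI)
qed

instance basis_index :: (euclidean_space) finite
  by standard (rule finite_UNIV_basis_index)

definition basis_index_rank :: "'a::euclidean_space basis_index \<Rightarrow> nat" where
  "basis_index_rank = (SOME f. inj f)"

lemma inj_basis_index_rank: "inj basis_index_rank"
proof -
  have "\<exists>f::'a basis_index \<Rightarrow> nat. inj f"
    using finite_imp_inj_to_nat_seg[OF finite_UNIV_basis_index] by blast
  then show ?thesis unfolding basis_index_rank_def by (rule someI_ex)
qed

instantiation basis_index :: (euclidean_space) wellorder
begin

definition less_eq_basis_index :: "'a basis_index \<Rightarrow> 'a basis_index \<Rightarrow> bool" where
  "less_eq_basis_index i j = (basis_index_rank i \<le> basis_index_rank j)"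

definition less_basis_index :: "'a basis_index \<Rightarrow> 'a basis_index \<Rightarrow> bool" where
  "less_basis_index i j = (basis_index_rank i < basis_index_rank j)"

instance
proof
  fix i j k :: "'a basis_index"
  show "(i < j) = (i \<le> j \<and> \<not> j \<le> i)" by (auto simp: less_eq_basis_index_def less_basis_index_def)
  show "i \<le> i" by (simp add: less_eq_basis_index_def)
  show "i \<le> j \<Longrightarrow> j \<le> k \<Longrightarrow> i \<le> k" by (simp add: less_eq_basis_index_def)
  show "i \<le> j \<Longrightarrow> j \<le> i \<Longrightarrow> i = j"
    using inj_basis_index_rank by (auto simp: less_eq_basis_index_def dest: injD)
  show "i \<le> j \<or> j \<le> i" by (auto simp: less_eq_basis_index_def)
next
  fix P :: "'a basis_index \<Rightarrow> bool" and i
  assume step: "\<And>i. (\<And>j. j < i \<Longrightarrow> P j) \<Longrightarrow> P i"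
  have "\<And>i. basis_index_rank i = n \<Longrightarrow> P i" for n
    by (induction n rule: less_induct) (metis step less_basis_index_def)
  then show "P i" by blast
qed

end

lemma basis_vec_in_Basis: "basis_vec i \<in> Basis"
  using basis_vec by blast

lemma inj_basis_vec: "inj basis_vec"
  by (meson basis_vec_inject injI)

lemma range_basis_vec: "range basis_vec = (Basis :: 'a::euclidean_space set)"
  using type_definition.Rep_range[OF type_definition_basis_index] .

lemma sum_basis_index: "(\<Sum>i\<in>UNIV. f (basis_vec i)) = (\<Sum>b\<in>(Basis::'a::euclidean_space set). f b)"
proof -
  have "sum f (range basis_vec) = sum (f \<circ> basis_vec) UNIV" by (rule sum.reindex[OF inj_basis_vec])
  then show ?thesis by (simp only: range_basis_vec comp_def)
qed

lemma prod_basis_index: "(\<Prod>i\<in>UNIV. f (basis_vec i)) = (\<Prod>b\<in>(Basis::'a::euclidean_space set). f b)"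
proof -
  have "prod f (range basis_vec) = prod (f \<circ> basis_vec) UNIV" by (rule prod.reindex[OF inj_basis_vec])
  then show ?thesis by (simp only: range_basis_vec comp_def)
qed

lemma inner_basis_vec: "basis_vec i \<bullet> basis_vec j = (if i = j then 1 else 0)"
  using basis_vec_in_Basis[of i] basis_vec_in_Basis[of j] basis_vec_inject[of i j]
  by (auto simp: inner_not_same_Basis)

lemma inner_axis_one: "(w::real^'n) \<bullet> axis i 1 = w $ i"
  by (simp add: inner_axis)

definition coords :: "'a::euclidean_space \<Rightarrow> real^('a basis_index)" where
  "coords x = (\<chi> i. x \<bullet> basis_vec i)"

definition of_coords :: "real^('a::euclidean_space basis_index) \<Rightarrow> 'a" where
  "of_coords w = (\<Sum>i\<in>UNIV. (w$i) *\<^sub>R basis_vec i)"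

lemma of_coords_coords [simp]: "of_coords (coords x) = x"
  unfolding of_coords_def coords_def using sum_basis_index[of "\<lambda>b. (x \<bullet> b) *\<^sub>R b"]
  by (simp add: euclidean_representation)

lemma inner_of_coords_basis_vec: "of_coords w \<bullet> basis_vec j = w $ j"
  by (simp add: of_coords_def inner_sum_left inner_basis_vec if_distrib cong: if_cong)

lemma coords_of_coords [simp]: "coords (of_coords w) = w"
  by (simp add: coords_def vec_eq_iff inner_of_coords_basis_vec)

lemma of_coords_axis: "of_coords (axis j 1 :: real^('a::euclidean_space basis_index)) = basis_vec j"
  by (simp add: of_coords_def axis_def if_distrib[of "\<lambda>a. a *\<^sub>R _"] sum.delta cong: if_cong)

lemma inner_coords: "coords a \<bullet> coords b = a \<bullet> (b::'a::euclidean_space)"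
proof -
  have "coords a \<bullet> coords b = (\<Sum>i\<in>UNIV. (a \<bullet> basis_vec i) * (b \<bullet> basis_vec i))"
    by (simp add: inner_vec_def coords_def)
  also have "\<dots> = (\<Sum>v\<in>(Basis::'a set). (a \<bullet> v) * (b \<bullet> v))"
    by (rule sum_basis_index)
  also have "\<dots> = a \<bullet> b" by (simp add: euclidean_inner[symmetric])
  finally show ?thesis .
qed

lemma norm_coords: "norm (coords a) = norm (a::'a::euclidean_space)"
  using inner_coords[of a a] by (simp add: norm_eq_sqrt_inner)

lemma bounded_linear_coords: "bounded_linear coords"
proof -
  have "linear coords"
    by (rule linearI) (simp_all add: coords_def vec_eq_iff inner_add_left)
  then show ?thesis by (simp add: linear_conv_bounded_linear)
qed

lemma bounded_linear_of_coords: "bounded_linear of_coords"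
proof -
  have "linear of_coords"
    by (rule linearI) (simp_all add: of_coords_def scaleR_add_left sum.distrib scaleR_sum_right)
  then show ?thesis by (simp add: linear_conv_bounded_linear)
qed

lemma coords_measurable [measurable]: "coords \<in> borel_measurable borel"
  using bounded_linear_coords by (intro borel_measurable_continuous_onI linear_continuous_on)

lemma of_coords_measurable [measurable]: "of_coords \<in> borel_measurable borel"
  using bounded_linear_of_coords by (intro borel_measurable_continuous_onI linear_continuous_on)

lemma coords_vimage_box: "coords -` box l u = box (of_coords l) (of_coords u)"
proof -
  have "coords -` box l u = {x. \<forall>i. l$i < x \<bullet> basis_vec i \<and> x \<bullet> basis_vec i < u$i}"
    by (auto simp: box_def Basis_vec_def inner_axis_one coords_def)
  also have "\<dots> = {x. \<forall>b\<in>Basis. of_coords l \<bullet> b < x \<bullet> b \<and> x \<bullet> b < of_coords u \<bullet> b}"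
  proof (intro Collect_cong iffI ballI allI)
    fix x b assume "\<forall>i. l$i < x \<bullet> basis_vec i \<and> x \<bullet> basis_vec i < u$i" and "(b::'a) \<in> Basis"
    then show "of_coords l \<bullet> b < x \<bullet> b \<and> x \<bullet> b < of_coords u \<bullet> b"
      using range_basis_vec by (metis inner_of_coords_basis_vec rangeE)
  next
    fix x i assume "\<forall>b\<in>Basis. of_coords l \<bullet> b < x \<bullet> b \<and> x \<bullet> b < of_coords u \<bullet> b"
    then show "l$i < x \<bullet> basis_vec i \<and> x \<bullet> basis_vec i < u$i"
      using basis_vec_in_Basis[of i] by (metis inner_of_coords_basis_vec)
  qed
  finally show ?thesis by (simp add: box_def)
qed

lemma lborel_eq_distr_coords:
  "(lborel :: (real^('a::euclidean_space basis_index)) measure) = distr (lborel::'a measure) borel coords"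
proof (rule lborel_eqI)
  fix l u :: "real^('a basis_index)"
  assume "\<And>b. b \<in> Basis \<Longrightarrow> l \<bullet> b \<le> u \<bullet> b"
  then have le: "\<And>i. l $ i \<le> u $ i"
    by (metis axis_in_Basis_iff inner_axis_one Basis_real_def insertI1)
  have "emeasure (distr lborel borel coords) (box l u) = emeasure lborel (box (of_coords l) (of_coords u))"
    by (simp add: emeasure_distr coords_vimage_box)
  also have "\<dots> = (\<Prod>b\<in>(Basis::'a set). (of_coords u - of_coords l) \<bullet> b)"
  proof (rule emeasure_lborel_box)
    fix b :: 'a assume "b \<in> Basis"
    then obtain i where "b = basis_vec i" using range_basis_vec by blast
    then show "of_coords l \<bullet> b \<le> of_coords u \<bullet> b" by (simp add: inner_of_coords_basis_vec le)
  qed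
  also have "\<dots> = (\<Prod>i\<in>UNIV. (u - l) $ i)"
    using prod_basis_index[of "\<lambda>b. (of_coords u - of_coords l) \<bullet> b"]
    by (simp add: inner_diff_left inner_of_coords_basis_vec)
  also have "\<dots> = (\<Prod>b\<in>Basis. (u - l) \<bullet> b)"
  proof -
    have B: "(Basis :: (real^('a basis_index)) set) = range (\<lambda>i. axis i 1)" by (auto simp: Basis_vec_def)
    have "inj (\<lambda>i::'a basis_index. axis i (1::real))" by (auto simp: inj_on_def axis_eq_axis)
    then have "prod ((\<bullet>) (u - l)) (range (\<lambda>i. axis i 1)) = prod (((\<bullet>) (u - l)) \<circ> (\<lambda>i. axis i 1)) UNIV"
      by (rule prod.reindex)
    moreover have "\<And>i. (u - l) \<bullet> axis i 1 = u$i - l$i" by (metis inner_axis_one vector_minus_component)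
    ultimately show ?thesis unfolding B by (simp only: comp_def) simp
  qed
  finally show "emeasure (distr lborel borel coords) (box l u) = (\<Prod>b\<in>Basis. (u - l) \<bullet> b)" .
qed simp

lemma nn_integral_lborel_coords:
  assumes "F \<in> borel_measurable borel"
  shows "(\<integral>\<^sup>+w. F w \<partial>(lborel :: (real^('a::euclidean_space basis_index)) measure))
       = (\<integral>\<^sup>+x. F (coords x) \<partial>(lborel :: 'a measure))"
  by (subst lborel_eq_distr_coords) (rule nn_integral_distr, simp_all add: assms)

definition coord_matrix :: "('a::euclidean_space \<Rightarrow> 'a) \<Rightarrow> real^('a basis_index)^('a basis_index)" where
  "coord_matrix f = (\<chi> i j. f (basis_vec j) \<bullet> basis_vec i)"

definition euclidean_det :: "('a::euclidean_space \<Rightarrow> 'a) \<Rightarrow> real" where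
  "euclidean_det f = det (coord_matrix f)"

lemma matrix_conj_coords: "matrix (\<lambda>v. coords (f (of_coords v))) = coord_matrix f"
  by (simp add: matrix_def of_coords_axis coords_def coord_matrix_def)

lemma coord_matrix_mult:
  assumes "linear f"
  shows "coord_matrix f *v w = coords (f (of_coords w))"
proof -
  have "f (of_coords w) = (\<Sum>j\<in>UNIV. w$j *\<^sub>R f (basis_vec j))"
    unfolding of_coords_def using assms by (simp add: linear_sum linear_scale)
  then show ?thesis
    by (simp add: vec_eq_iff matrix_vector_mult_def coords_def coord_matrix_def inner_sum_left mult.commute)
qed

lemma euclidean_det_rank_one_update_ratio:
  fixes f :: "'a::euclidean_space \<Rightarrow> 'a" and u u' :: 'a
  assumes lin: "linear f" and coercive: "\<And>v. lam * (norm v)\<^sup>2 \<le> v \<bullet> f v" and lam: "lam > 0"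
    and a: "0 \<le> a" "a \<le> amax" and a': "0 \<le> a'" and u: "norm u \<le> 1" and c: "c \<noteq> 0"
  shows "euclidean_det (\<lambda>v. c *\<^sub>R (f v + (a' * (u' \<bullet> v)) *\<^sub>R u')) \<noteq> 0"
    and "\<bar>euclidean_det (\<lambda>v. c *\<^sub>R (f v + (a * (u \<bullet> v)) *\<^sub>R u))\<bar>
         \<le> (1 + amax / lam) * \<bar>euclidean_det (\<lambda>v. c *\<^sub>R (f v + (a' * (u' \<bullet> v)) *\<^sub>R u'))\<bar>"
proof -
  define M where "M = coord_matrix f"
  have coercive_M: "lam * (norm w)\<^sup>2 \<le> w \<bullet> (M *v w)" for w
    using coercive[of "of_coords w"] unfolding M_def coord_matrix_mult[OF lin]
    by (metis norm_coords coords_of_coords inner_coords)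
  have update: "euclidean_det (\<lambda>v. c *\<^sub>R (f v + (b * (w \<bullet> v)) *\<^sub>R w))
      = c ^ CARD('a basis_index) * det (M + b *\<^sub>R (\<chi> i j. coords w $ i * coords w $ j))" for b w
  proof -
    have "coord_matrix (\<lambda>v. c *\<^sub>R (f v + (b * (w \<bullet> v)) *\<^sub>R w))
        = c *\<^sub>R (M + b *\<^sub>R (\<chi> i j. coords w $ i * coords w $ j))"
      by (simp add: M_def coord_matrix_def vec_eq_iff coords_def inner_add_left algebra_simps)
    then show ?thesis unfolding euclidean_det_def by (simp add: det_scaleR)
  qed
  have "norm (coords u) \<le> 1" using u norm_coords by metis
  note le = det_rank_one_update_le[OF coercive_M lam a this]
  note ge = det_rank_one_update_ge[OF coercive_M lam a', of "coords u'"]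
  have "c ^ CARD('a basis_index) \<noteq> 0" using c by simp
  then show "euclidean_det (\<lambda>v. c *\<^sub>R (f v + (a' * (u' \<bullet> v)) *\<^sub>R u')) \<noteq> 0"
    unfolding update using ge det_nonzero_if_coercive[OF coercive_M lam] by auto
  have "0 \<le> 1 + amax / lam" using a lam by simp
  with le ge have "\<bar>det (M + a *\<^sub>R (\<chi> i j. coords u $ i * coords u $ j))\<bar>
      \<le> (1 + amax / lam) * \<bar>det (M + a' *\<^sub>R (\<chi> i j. coords u' $ i * coords u' $ j))\<bar>"
    by (meson mult_left_mono order_trans)
  then have "\<bar>c ^ CARD('a basis_index)\<bar> * \<bar>det (M + a *\<^sub>R (\<chi> i j. coords u $ i * coords u $ j))\<bar>
      \<le> \<bar>c ^ CARD('a basis_index)\<bar>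
        * ((1 + amax / lam) * \<bar>det (M + a' *\<^sub>R (\<chi> i j. coords u' $ i * coords u' $ j))\<bar>)"
    by (rule mult_left_mono) simp
  then show "\<bar>euclidean_det (\<lambda>v. c *\<^sub>R (f v + (a * (u \<bullet> v)) *\<^sub>R u))\<bar>
      \<le> (1 + amax / lam) * \<bar>euclidean_det (\<lambda>v. c *\<^sub>R (f v + (a' * (u' \<bullet> v)) *\<^sub>R u'))\<bar>"
    unfolding update abs_mult by (simp add: mult_ac)
qed

lemma nn_integral_image_change_of_variables_cart:
  fixes G :: "real^'n::{finite,wellorder} \<Rightarrow> real^'n::{finite,wellorder}"
  assumes S: "S \<in> sets borel" and GS: "G ` S \<in> sets borel"
    and G': "\<And>w. (G has_derivative G' w) (at w within S)" and inj: "inj_on G S"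
    and H: "H \<in> borel_measurable borel" and H_nonneg: "\<And>w. 0 \<le> H w"
    and H_finite: "(\<integral>\<^sup>+w. ennreal (indicator (G ` S) w * H w) \<partial>lborel) < \<infinity>"
  shows "(\<integral>\<^sup>+w. ennreal (indicator (G ` S) w * H w) \<partial>lborel)
       = (\<integral>\<^sup>+w. ennreal (indicator S w * (\<bar>det (matrix (G' w))\<bar> * H (G w))) \<partial>lborel)"
proof -
  have GH_measurable: "(\<lambda>w. indicator (G ` S) w * H w) \<in> borel_measurable borel"
    using GS H by measurable
  have "integrable lborel (\<lambda>w. indicator (G ` S) w * H w)"
    by (rule integrableI_nonneg[rotated 2, OF H_finite]) (use GH_measurable in \<open>auto simp: H_nonneg\<close>)
  then have "integrable lebesgue (\<lambda>w. indicator (G ` S) w * H w)"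
    using integrable_completion[of "\<lambda>w. indicator (G ` S) w * H w"] GH_measurable by simp
  then have H_integrable: "H absolutely_integrable_on (G ` S)"
    by (simp add: set_integrable_def)
  define J where "J = (\<lambda>w. \<bar>det (matrix (G' w))\<bar> * H (G w))"
  have "S \<in> sets lebesgue" using S by simp
  from has_absolute_integral_change_of_variables[OF this G' inj,
      of "\<lambda>w. vec (H w) :: real^1" "integral (G ` S) (\<lambda>w. vec (H w) :: real^1)"] H_integrable
  have cov: "(\<lambda>w. \<bar>det (matrix (G' w))\<bar> *\<^sub>R vec (H (G w)) :: real^1) absolutely_integrable_on S \<and>
      integral S (\<lambda>w. \<bar>det (matrix (G' w))\<bar> *\<^sub>R vec (H (G w)) :: real^1) = integral (G ` S) (\<lambda>w. vec (H w))"
    by (simp add: absolutely_integrable_on_1_iff)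
  have J_integrable: "J absolutely_integrable_on S"
    using cov by (simp add: absolutely_integrable_on_1_iff J_def)
  have J_integral: "integral S J = integral (G ` S) H"
    using cov[THEN conjunct2] unfolding integral_on_1_eq[of S] integral_on_1_eq[of "G ` S"]
    by (simp add: J_def)
  have "(J has_integral integral S J) S"
    using J_integrable set_lebesgue_integral_eq_integral(1) by (metis integrable_integral)
  then have "(\<integral>\<^sup>+w. ennreal (indicator S w * J w) \<partial>lborel) = ennreal (integral S J)"
    using nn_integral_has_integral_lebesgue[of S J] by (simp add: J_def H_nonneg)
  moreover have "(H has_integral integral (G ` S) H) (G ` S)"
    using H_integrable set_lebesgue_integral_eq_integral(1) by (metis integrable_integral)
  then have "(\<integral>\<^sup>+w. ennreal (indicator (G ` S) w * H w) \<partial>lborel) = ennreal (integral (G ` S) H)"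
    using nn_integral_has_integral_lebesgue[of "G ` S" H] by (simp add: H_nonneg)
  ultimately show ?thesis using J_integral by (simp add: J_def)
qed

lemma nn_integral_image_change_of_variables:
  fixes g :: "'a::euclidean_space \<Rightarrow> 'a" and g' :: "'a \<Rightarrow> 'a \<Rightarrow> 'a" and h :: "'a \<Rightarrow> real"
  assumes A: "A \<in> sets borel" and gA: "g ` A \<in> sets borel"
    and g': "\<And>x. (g has_derivative g' x) (at x)" and inj: "inj g"
    and h: "h \<in> borel_measurable borel" and h_nonneg: "\<And>x. 0 \<le> h x"
    and h_finite: "(\<integral>\<^sup>+x. ennreal (h x) \<partial>lborel) < \<infinity>"
    and det_g': "(\<lambda>x. euclidean_det (g' x)) \<in> borel_measurable borel"
    and g: "g \<in> borel_measurable borel"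
  shows "(\<integral>\<^sup>+x. ennreal (indicator (g ` A) x * h x) \<partial>lborel)
       = (\<integral>\<^sup>+x. ennreal (indicator A x * (\<bar>euclidean_det (g' x)\<bar> * h (g x))) \<partial>lborel)"
proof -
  define G where "G = (\<lambda>w. coords (g (of_coords w)))"
  define G' where "G' = (\<lambda>w v. coords (g' (of_coords w) (of_coords v)))"
  define S where "S = (of_coords -` A :: (real^('a basis_index)) set)"
  have GS: "G ` S = of_coords -` (g ` A)"
  proof (intro equalityI subsetI)
    fix w assume "w \<in> G ` S"
    then show "w \<in> of_coords -` (g ` A)" unfolding G_def S_def by auto
  next
    fix w assume "w \<in> of_coords -` (g ` A)"
    then obtain a where a: "a \<in> A" "of_coords w = g a" by auto
    then have "w = G (coords a)" unfolding G_def by (metis coords_of_coords of_coords_coords)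
    moreover have "coords a \<in> S" using a unfolding S_def by simp
    ultimately show "w \<in> G ` S" by blast
  qed
  have G': "(G has_derivative G' w) (at w within S)" for w
  proof -
    have "((\<lambda>w. g (of_coords w)) has_derivative (\<lambda>v. g' (of_coords w) (of_coords v))) (at w)"
      by (rule has_derivative_compose[OF bounded_linear_imp_has_derivative[OF bounded_linear_of_coords] g'])
    from has_derivative_compose[OF this bounded_linear_imp_has_derivative[OF bounded_linear_coords]]
    show ?thesis unfolding G_def G'_def by (rule has_derivative_at_withinI)
  qed
  have inj_G: "inj_on G S"
    using inj by (intro inj_onI) (metis G_def of_coords_coords coords_of_coords inj_eq)
  have GH_measurable: "(\<lambda>w. indicator (G ` S) w * h (of_coords w)) \<in> borel_measurable borel"
    unfolding GS using gA h by measurable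
  have GH_eq: "(\<integral>\<^sup>+w. ennreal (indicator (G ` S) w * h (of_coords w)) \<partial>lborel)
      = (\<integral>\<^sup>+x. ennreal (indicator (g ` A) x * h x) \<partial>lborel)"
    by (subst nn_integral_lborel_coords) (use GH_measurable in \<open>simp_all add: GS indicator_def\<close>)
  also have "\<dots> \<le> (\<integral>\<^sup>+x. ennreal (h x) \<partial>lborel)"
    by (intro nn_integral_mono) (auto simp: indicator_def h_nonneg)
  finally have GH_finite: "(\<integral>\<^sup>+w. ennreal (indicator (G ` S) w * h (of_coords w)) \<partial>lborel) < \<infinity>"
    using h_finite by (meson le_less_trans)
  have J_eq: "\<bar>det (matrix (G' w))\<bar> * h (of_coords (G w)) = \<bar>euclidean_det (g' (of_coords w))\<bar> * h (g (of_coords w))" for w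
    by (simp add: G'_def matrix_conj_coords euclidean_det_def G_def)
  have SJ_measurable: "(\<lambda>w. indicator S w * (\<bar>euclidean_det (g' (of_coords w))\<bar> * h (g (of_coords w))))
      \<in> borel_measurable borel"
    unfolding S_def using A det_g' g h by measurable
  have "S \<in> sets borel" unfolding S_def using measurable_sets[OF of_coords_measurable A] by simp
  moreover have "G ` S \<in> sets borel" unfolding GS using measurable_sets[OF of_coords_measurable gA] by simp
  moreover have "(\<lambda>w. h (of_coords w)) \<in> borel_measurable borel" using h by measurable
  ultimately have "(\<integral>\<^sup>+x. ennreal (indicator (g ` A) x * h x) \<partial>lborel)
      = (\<integral>\<^sup>+w. ennreal (indicator S w * (\<bar>euclidean_det (g' (of_coords w))\<bar> * h (g (of_coords w)))) \<partial>lborel)"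
    using nn_integral_image_change_of_variables_cart[where H = "\<lambda>w. h (of_coords w)", OF _ _ G' inj_G _ _ GH_finite]
      GH_eq h_nonneg
    by (simp add: J_eq)
  also have "\<dots> = (\<integral>\<^sup>+x. ennreal (indicator A x * (\<bar>euclidean_det (g' x)\<bar> * h (g x))) \<partial>lborel)"
    by (subst nn_integral_lborel_coords) (use SJ_measurable in \<open>simp_all add: S_def indicator_def\<close>)
  finally show ?thesis .
qed

section \<open>The noise density\<close>

lemma nn_integral_exp_abs_finite:
  assumes k: "k > 0"
  shows "(\<integral>\<^sup>+t. ennreal (exp (- k * \<bar>t\<bar>)) \<partial>lborel) < \<infinity>"
proof -
  define F where "F = (\<lambda>t::real. ennreal (indicator {0..} t * exp (- k * t)))"
  have F_measurable [measurable]: "F \<in> borel_measurable borel" unfolding F_def by measurable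
  have F_integral: "(\<integral>\<^sup>+t. F t \<partial>lborel) = ennreal (1 / k)"
    using nn_integral_has_integral_lebesgue[OF _ has_integral_exp_minus_to_infinity[OF k, of 0]]
    by (simp add: F_def)
  have "(\<integral>\<^sup>+t. F (- t) \<partial>lborel) = (\<integral>\<^sup>+t. F t \<partial>(distr lborel borel uminus))"
    by (rule nn_integral_distr[symmetric]) simp_all
  also have "\<dots> = (\<integral>\<^sup>+t. F t \<partial>lborel)" by (simp add: lborel_distr_uminus)
  finally have F_reflected: "(\<integral>\<^sup>+t. F (- t) \<partial>lborel) = (\<integral>\<^sup>+t. F t \<partial>lborel)" .
  have "(\<integral>\<^sup>+t. ennreal (exp (- k * \<bar>t\<bar>)) \<partial>lborel) \<le> (\<integral>\<^sup>+t. F t + F (- t) \<partial>lborel)"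
  proof (intro nn_integral_mono)
    fix t :: real
    show "ennreal (exp (- k * \<bar>t\<bar>)) \<le> F t + F (- t)"
      by (cases "t \<ge> 0") (simp_all add: F_def add_increasing add_increasing2)
  qed
  also have "\<dots> = (\<integral>\<^sup>+t. F t \<partial>lborel) + (\<integral>\<^sup>+t. F (- t) \<partial>lborel)"
    by (rule nn_integral_add) simp_all
  also have "\<dots> < \<infinity>" unfolding F_reflected F_integral by simp
  finally show ?thesis .
qed

lemma nn_integral_exp_norm_finite:
  assumes c: "c > 0"
  shows "(\<integral>\<^sup>+u. ennreal (exp (- c * norm (u::'a::euclidean_space))) \<partial>lborel) < \<infinity>"
proof -
  define k where "k = c / real DIM('a)"
  have k: "k > 0" using c by (simp add: k_def)
  have "(\<integral>\<^sup>+u. ennreal (exp (- c * norm (u::'a))) \<partial>lborel)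
      \<le> (\<integral>\<^sup>+u. (\<Prod>b\<in>Basis. ennreal (exp (- k * \<bar>(u::'a) \<bullet> b\<bar>))) \<partial>lborel)"
  proof (intro nn_integral_mono)
    fix u :: 'a
    have "(\<Sum>b\<in>Basis. \<bar>u \<bullet> b\<bar>) \<le> (\<Sum>b\<in>(Basis::'a set). norm u)"
      by (intro sum_mono Basis_le_norm)
    then have "k * (\<Sum>b\<in>Basis. \<bar>u \<bullet> b\<bar>) \<le> k * (real DIM('a) * norm u)"
      using k by (intro mult_left_mono) auto
    then have "k * (\<Sum>b\<in>Basis. \<bar>u \<bullet> b\<bar>) \<le> c * norm u"
      by (simp add: k_def)
    then have "exp (- c * norm u) \<le> exp (\<Sum>b\<in>Basis. - k * \<bar>u \<bullet> b\<bar>)"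
      by (simp add: sum_negf sum_distrib_left[symmetric])
    also have "\<dots> = (\<Prod>b\<in>Basis. exp (- k * \<bar>u \<bullet> b\<bar>))" by (simp add: exp_sum)
    finally show "ennreal (exp (- c * norm u)) \<le> (\<Prod>b\<in>Basis. ennreal (exp (- k * \<bar>u \<bullet> b\<bar>)))"
      by (simp add: prod_ennreal ennreal_leI)
  qed
  also have "\<dots> = (\<Prod>b\<in>(Basis::'a set). (\<integral>\<^sup>+t. ennreal (exp (- k * \<bar>t\<bar>)) \<partial>lborel))"
    by (rule nn_integral_lborel_prod) simp_all
  also have "\<dots> < \<infinity>"
    using nn_integral_exp_abs_finite[OF k] by (simp add: power_less_top_ennreal)
  finally show ?thesis .
qed

lemma integral_exp_norm_pos:
  assumes c: "c > 0"
  shows "0 < (\<integral>u. exp (- c * norm (u::'a::euclidean_space)) \<partial>lborel)"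
proof -
  have integrable: "integrable lborel (\<lambda>u::'a. exp (- c * norm u))"
    by (rule integrableI_nonneg) (use nn_integral_exp_norm_finite[OF c] in auto)
  have "(\<integral>u. exp (- c * norm (u::'a)) \<partial>lborel) \<noteq> 0"
  proof
    assume "(\<integral>u. exp (- c * norm (u::'a)) \<partial>lborel) = 0"
    then have "AE u in (lborel::'a measure). False"
      using integral_nonneg_eq_0_iff_AE[OF integrable] by auto
    then show False
      by (subst (asm) AE_iff_measurable[OF _ refl]) auto
  qed
  moreover have "0 \<le> (\<integral>u. exp (- c * norm (u::'a)) \<partial>lborel)"
    by (rule integral_nonneg_AE) simp
  ultimately show ?thesis by linarith
qed

definition noise_density :: "real \<Rightarrow> 'a::euclidean_space \<Rightarrow> real" where
  "noise_density a e = exp (- (a / 2) * norm e) / (\<integral>u. exp (- (a / 2) * norm (u::'a)) \<partial>lborel)"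

lemma noise_measure_eq_density: "noise_measure a = density lborel (\<lambda>e. ennreal (noise_density a e))"
  by (simp add: noise_measure_def noise_density_def)

lemma noise_density_measurable [measurable]: "noise_density a \<in> borel_measurable borel"
  unfolding noise_density_def[abs_def] by measurable

lemma noise_density_pos: "a > 0 \<Longrightarrow> noise_density a e > 0"
  unfolding noise_density_def using integral_exp_norm_pos[of "a / 2"] by (intro divide_pos_pos) auto

lemma nn_integral_noise_density_finite:
  assumes a: "a > 0"
  shows "(\<integral>\<^sup>+e. ennreal (noise_density a (e::'a::euclidean_space)) \<partial>lborel) < \<infinity>"
proof -
  define Z where "Z = (\<integral>u. exp (- (a / 2) * norm (u::'a)) \<partial>lborel)"
  have Z: "Z > 0" unfolding Z_def using integral_exp_norm_pos[of "a / 2"] a by simp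
  have "(\<integral>\<^sup>+e. ennreal (noise_density a (e::'a)) \<partial>lborel)
      = (\<integral>\<^sup>+e. ennreal (1 / Z) * ennreal (exp (- (a / 2) * norm (e::'a))) \<partial>lborel)"
    using Z by (intro nn_integral_cong) (simp add: noise_density_def Z_def ennreal_mult[symmetric])
  also have "\<dots> = ennreal (1 / Z) * (\<integral>\<^sup>+e. ennreal (exp (- (a / 2) * norm (e::'a))) \<partial>lborel)"
    by (rule nn_integral_cmult) simp
  also have "\<dots> < \<infinity>"
  proof -
    have "(\<integral>\<^sup>+e. ennreal (exp (- (a / 2) * norm (e::'a))) \<partial>lborel) < \<infinity>"
      using nn_integral_exp_norm_finite[of "a / 2"] a by simp
    then show ?thesis by (simp add: ennreal_mult_less_top)
  qed
  finally show ?thesis .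
qed

lemma noise_density_le_shift:
  assumes a: "a > 0" and d: "norm (e1 - e2) \<le> 2"
  shows "noise_density a e1 \<le> exp a * noise_density a (e2::'a::euclidean_space)"
proof -
  have "norm e2 \<le> norm e1 + norm (e1 - e2)" by (metis norm_triangle_sub add.commute norm_minus_commute)
  then have "a * (norm e2 - 2) \<le> a * norm e1" using a d by (intro mult_left_mono) auto
  then have "exp (- (a / 2) * norm e1) \<le> exp a * exp (- (a / 2) * norm e2)"
    by (simp add: exp_add[symmetric] algebra_simps)
  moreover have "0 < (\<integral>u. exp (- (a / 2) * norm (u::'a)) \<partial>lborel)"
    using integral_exp_norm_pos[of "a / 2"] a by simp
  ultimately have "exp (- (a / 2) * norm e1) / (\<integral>u. exp (- (a / 2) * norm (u::'a)) \<partial>lborel)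
      \<le> exp a * exp (- (a / 2) * norm e2) / (\<integral>u. exp (- (a / 2) * norm (u::'a)) \<partial>lborel)"
    by (simp add: divide_right_mono)
  then show ?thesis unfolding noise_density_def by (simp only: times_divide_eq_right)
qed

section \<open>Convex loss and strongly convex regulariser\<close>

lemma DERIV_ge_of_difference_quotients_ge:
  assumes "(\<phi> has_real_derivative d) (at 0)"
    and "\<And>t. 0 < t \<Longrightarrow> t < 1 \<Longrightarrow> k \<le> (\<phi> t - \<phi> 0) / t"
  shows "k \<le> d"
proof -
  have "((\<lambda>t. (\<phi> t - \<phi> 0) / (t - 0)) \<longlongrightarrow> d) (at 0)"
    using assms(1) has_field_derivative_iff by blast
  then have "((\<lambda>t. (\<phi> t - \<phi> 0) / t) \<longlongrightarrow> d) (at_right 0)"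
    by (simp add: filterlim_at_split)
  moreover have "eventually (\<lambda>t. k \<le> (\<phi> t - \<phi> 0) / t) (at_right (0::real))"
    using eventually_at_right_real[of 0 1] assms(2) by (auto elim!: eventually_mono)
  ultimately show ?thesis
    by (intro tendsto_le[OF _ _ tendsto_const]) simp_all
qed

lemma DERIV_le_of_difference_quotients_le:
  assumes "(\<phi> has_real_derivative d) (at 0)"
    and "\<And>t. 0 < t \<Longrightarrow> t < 1 \<Longrightarrow> (\<phi> t - \<phi> 0) / t \<le> h t"
    and "(h \<longlongrightarrow> H) (at_right 0)"
  shows "d \<le> H"
proof -
  have "((\<lambda>t. (\<phi> t - \<phi> 0) / (t - 0)) \<longlongrightarrow> d) (at 0)"
    using assms(1) has_field_derivative_iff by blast
  then have "((\<lambda>t. (\<phi> t - \<phi> 0) / t) \<longlongrightarrow> d) (at_right 0)"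
    by (simp add: filterlim_at_split)
  moreover have "eventually (\<lambda>t. (\<phi> t - \<phi> 0) / t \<le> h t) (at_right (0::real))"
    using eventually_at_right_real[of 0 1] assms(2) by (auto elim!: eventually_mono)
  ultimately show ?thesis
    by (intro tendsto_le[OF _ assms(3)]) simp_all
qed

lemma strictly_convex_tangent_le:
  assumes conv: "strictly_convex L" and L1: "\<And>t. (L has_real_derivative L1 t) (at t)"
  shows "L t + L1 t * (s - t) \<le> L s"
proof (cases "s = t")
  case False
  define \<phi> where "\<phi> = (\<lambda>\<tau>. L ((1 - \<tau>) * t + \<tau> * s))"
  have "((\<lambda>\<tau>. (1 - \<tau>) * t + \<tau> * s) has_real_derivative (s - t)) (at 0)"
    by (auto intro!: derivative_eq_intros simp: algebra_simps)
  from DERIV_chain2[OF _ this, of L "L1 t"] L1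
  have d: "(\<phi> has_real_derivative L1 t * (s - t)) (at 0)" unfolding \<phi>_def by simp
  have "L1 t * (s - t) \<le> L s - L t"
  proof (rule DERIV_le_of_difference_quotients_le[OF d, where h="\<lambda>_. L s - L t"])
    fix \<tau> :: real assume \<tau>: "0 < \<tau>" "\<tau> < 1"
    then have "\<phi> \<tau> < (1 - \<tau>) * L t + \<tau> * L s"
      using conv False unfolding strictly_convex_def \<phi>_def by (metis (no_types))
    then have "\<phi> \<tau> - \<phi> 0 \<le> \<tau> * (L s - L t)" by (simp add: \<phi>_def algebra_simps)
    then show "(\<phi> \<tau> - \<phi> 0) / \<tau> \<le> L s - L t" using \<tau> by (simp add: divide_le_eq mult.commute)
  qed simp
  then show ?thesis by simp
qed simp

lemma strictly_convex_second_derivative_nonneg: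
  assumes conv: "strictly_convex L" and L1: "\<And>t. (L has_real_derivative L1 t) (at t)"
    and L2: "\<And>t. (L1 has_real_derivative L2 t) (at t)"
  shows "0 \<le> L2 t"
proof -
  have mono: "0 \<le> (L1 s - L1 t) * (s - t)" for s t
    using strictly_convex_tangent_le[OF conv L1, of s t] strictly_convex_tangent_le[OF conv L1, of t s]
    by (simp add: algebra_simps)
  have "((\<lambda>\<tau>. t + \<tau>) has_real_derivative 1) (at 0)" by (auto intro!: derivative_eq_intros)
  from DERIV_chain2[OF L2[of "t + 0"] this]
  have "((\<lambda>\<tau>. L1 (t + \<tau>)) has_real_derivative L2 t) (at 0)" by simp
  then show ?thesis
  proof (rule DERIV_ge_of_difference_quotients_ge)
    fix \<tau> :: real assume "0 < \<tau>" "\<tau> < 1"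
    then show "0 \<le> (L1 (t + \<tau>) - L1 (t + 0)) / \<tau>"
      using mono[of "t + \<tau>" t] by (simp add: zero_le_mult_iff)
  qed
qed

lemma strongly_convex_tangent_le:
  fixes R :: "'a::euclidean_space \<Rightarrow> real"
  assumes sc: "strongly_convex 1 R" and D1: "\<And>x. (R has_derivative blinfun_apply (D1 x)) (at x)"
  shows "R f + D1 f (z - f) + (1/2) * (norm (z - f))\<^sup>2 \<le> R z"
proof -
  define \<phi> where "\<phi> = (\<lambda>\<tau>::real. R ((1 - \<tau>) *\<^sub>R f + \<tau> *\<^sub>R z))"
  have "((\<lambda>\<tau>::real. (1 - \<tau>) *\<^sub>R f + \<tau> *\<^sub>R z) has_derivative (\<lambda>h. h *\<^sub>R (z - f))) (at 0)"
    by (auto intro!: derivative_eq_intros simp: algebra_simps)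
  from has_derivative_compose[OF this D1]
  have "(\<phi> has_derivative (\<lambda>h. D1 f (h *\<^sub>R (z - f)))) (at 0)" unfolding \<phi>_def by simp
  then have d: "(\<phi> has_real_derivative D1 f (z - f)) (at 0)"
    unfolding has_field_derivative_def
    by (rule has_derivative_eq_rhs) (simp add: fun_eq_iff blinfun.scaleR_right mult.commute)
  have "D1 f (z - f) \<le> R z - R f - (1/2) * (norm (z - f))\<^sup>2"
  proof (rule DERIV_le_of_difference_quotients_le[OF d,
        where h="\<lambda>\<tau>. R z - R f - (1/2) * (1 - \<tau>) * (norm (z - f))\<^sup>2"])
    fix \<tau> :: real assume \<tau>: "0 < \<tau>" "\<tau> < 1"
    have "\<forall>x y t. 0 \<le> t \<longrightarrow> t \<le> 1 \<longrightarrow>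
        R ((1 - t) *\<^sub>R x + t *\<^sub>R y) \<le> (1 - t) * R x + t * R y - (1 / 2) * t * (1 - t) * (norm (x - y))\<^sup>2"
      using sc unfolding strongly_convex_def by simp
    then have "\<phi> \<tau> \<le> (1 - \<tau>) * R f + \<tau> * R z - (1/2) * \<tau> * (1 - \<tau>) * (norm (f - z))\<^sup>2"
      using \<tau> unfolding \<phi>_def by simp
    then have "\<phi> \<tau> - \<phi> 0 \<le> \<tau> * (R z - R f - (1/2) * (1 - \<tau>) * (norm (z - f))\<^sup>2)"
      by (simp add: \<phi>_def algebra_simps norm_minus_commute)
    then show "(\<phi> \<tau> - \<phi> 0) / \<tau> \<le> R z - R f - (1/2) * (1 - \<tau>) * (norm (z - f))\<^sup>2"
      using \<tau> by (simp add: divide_le_eq mult.commute)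
  qed (auto intro!: tendsto_eq_intros)
  then show ?thesis by simp
qed

lemma strongly_convex_second_derivative_ge:
  fixes R :: "'a::euclidean_space \<Rightarrow> real"
  assumes sc: "strongly_convex 1 R" and D1: "\<And>x. (R has_derivative blinfun_apply (D1 x)) (at x)"
    and D2: "\<And>x. (D1 has_derivative blinfun_apply (D2 x)) (at x)"
  shows "(norm v)\<^sup>2 \<le> D2 f v v"
proof -
  define \<psi> where "\<psi> = (\<lambda>\<tau>::real. D1 (f + \<tau> *\<^sub>R v) v)"
  have "((\<lambda>\<tau>::real. f + \<tau> *\<^sub>R v) has_derivative (\<lambda>h. h *\<^sub>R v)) (at 0)"
    by (auto intro!: derivative_eq_intros)
  from has_derivative_compose[OF this D2]
  have "((\<lambda>\<tau>. D1 (f + \<tau> *\<^sub>R v)) has_derivative (\<lambda>h. D2 f (h *\<^sub>R v))) (at 0)" by simp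
  then have "(\<psi> has_derivative (\<lambda>h. D2 f (h *\<^sub>R v) v)) (at 0)"
    unfolding \<psi>_def by (auto intro!: derivative_eq_intros)
  then have "(\<psi> has_real_derivative D2 f v v) (at 0)"
    unfolding has_field_derivative_def
    by (rule has_derivative_eq_rhs) (simp add: fun_eq_iff blinfun.scaleR_right blinfun.scaleR_left mult.commute)
  then show ?thesis
  proof (rule DERIV_ge_of_difference_quotients_ge)
    fix \<tau> :: real assume \<tau>: "0 < \<tau>" "\<tau> < 1"
    have forward: "R f + D1 f (\<tau> *\<^sub>R v) + (1/2) * (norm (\<tau> *\<^sub>R v))\<^sup>2 \<le> R (f + \<tau> *\<^sub>R v)"
      using strongly_convex_tangent_le[OF sc D1, of f "f + \<tau> *\<^sub>R v"] by simp
    have backward: "R (f + \<tau> *\<^sub>R v) + D1 (f + \<tau> *\<^sub>R v) (- (\<tau> *\<^sub>R v)) + (1/2) * (norm (\<tau> *\<^sub>R v))\<^sup>2 \<le> R f"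
      using strongly_convex_tangent_le[OF sc D1, of "f + \<tau> *\<^sub>R v" f] by simp
    have e1: "D1 f (\<tau> *\<^sub>R v) = \<tau> * \<psi> 0" by (simp add: \<psi>_def blinfun.scaleR_right)
    have e2: "D1 (f + \<tau> *\<^sub>R v) (- (\<tau> *\<^sub>R v)) = - (\<tau> * \<psi> \<tau>)"
      by (simp add: \<psi>_def blinfun.scaleR_right blinfun.minus_right)
    have e3: "(norm (\<tau> *\<^sub>R v))\<^sup>2 = \<tau> * \<tau> * (norm v)\<^sup>2" using \<tau> by (simp add: power2_eq_square)
    have "\<tau> * \<tau> * (norm v)\<^sup>2 \<le> \<tau> * (\<psi> \<tau> - \<psi> 0)"
      using forward backward unfolding e1 e2 e3 by (simp add: algebra_simps)
    then have "\<tau> * (norm v)\<^sup>2 \<le> \<psi> \<tau> - \<psi> 0" using \<tau> by (simp add: mult.assoc)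
    then show "(norm v)\<^sup>2 \<le> (\<psi> \<tau> - \<psi> 0) / \<tau>" using \<tau> by (simp add: le_divide_eq mult.commute)
  qed
qed

lemma inner_sum_Basis_blinfun:
  fixes T :: "'a::euclidean_space \<Rightarrow>\<^sub>L real"
  shows "(\<Sum>b\<in>Basis. T b *\<^sub>R b) \<bullet> v = T v"
proof -
  have "(\<Sum>b\<in>Basis. T b *\<^sub>R b) \<bullet> v = (\<Sum>b\<in>Basis. T b * (b \<bullet> v))"
    by (simp add: inner_sum_left)
  also have "\<dots> = (\<Sum>b\<in>Basis. T b * (v \<bullet> b))"
    by (simp add: inner_commute)
  also have "\<dots> = T (\<Sum>b\<in>Basis. (v \<bullet> b) *\<^sub>R b)"
    by (simp add: blinfun.sum_right blinfun.scaleR_right mult.commute)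
  finally show ?thesis by (simp add: euclidean_representation)
qed

locale convex_loss_regularizer =
  fixes L L1 L2 :: "real \<Rightarrow> real" and c1 :: real
    and R :: "'d::euclidean_space \<Rightarrow> real" and D1 :: "'d \<Rightarrow> ('d \<Rightarrow>\<^sub>L real)"
    and D2 :: "'d \<Rightarrow> ('d \<Rightarrow>\<^sub>L ('d \<Rightarrow>\<^sub>L real))"
  assumes L1: "\<And>t. (L has_real_derivative L1 t) (at t)"
    and L2: "\<And>t. (L1 has_real_derivative L2 t) (at t)"
    and L2_continuous: "continuous_on UNIV L2"
    and L_tangent_le: "\<And>s t. L t + L1 t * (s - t) \<le> L s"
    and L1_bounded: "\<And>t. \<bar>L1 t\<bar> \<le> 1"
    and L2_bounds: "\<And>t. 0 \<le> L2 t \<and> L2 t \<le> c1"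
    and D1: "\<And>z. (R has_derivative blinfun_apply (D1 z)) (at z)"
    and D2: "\<And>z. (D1 has_derivative blinfun_apply (D2 z)) (at z)"
    and D2_continuous: "continuous_on UNIV D2"
    and R_tangent_le: "\<And>f z. R f + D1 f (z - f) + (1/2) * (norm (z - f))\<^sup>2 \<le> R z"
    and D2_ge: "\<And>f v. (norm v)\<^sup>2 \<le> D2 f v v"

lemma convex_loss_regularizerI:
  assumes L_convex: "strictly_convex L" and L_C2: "C2_real L"
    and L_bounds: "\<forall>t. \<bar>deriv L t\<bar> \<le> 1 \<and> \<bar>deriv (deriv L) t\<bar> \<le> c1"
    and R_C2: "C2_fun R" and R_strong: "strongly_convex 1 R"
  obtains L1 L2 D1 D2 where "convex_loss_regularizer L L1 L2 c1 R D1 D2"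
proof -
  obtain L1 L2 where L1: "\<And>t. (L has_real_derivative L1 t) (at t)"
      and L2: "\<And>t. (L1 has_real_derivative L2 t) (at t)" and "continuous_on UNIV L2"
    using L_C2 unfolding C2_real_def by blast
  moreover have "deriv L = L1" "deriv L1 = L2"
    using L1 L2 DERIV_imp_deriv by blast+
  moreover obtain D1 D2 where D1: "\<And>z. (R has_derivative blinfun_apply (D1 z)) (at z)"
      and D2: "\<And>z. (D1 has_derivative blinfun_apply (D2 z)) (at z)" and "continuous_on UNIV D2"
    using R_C2 unfolding C2_fun_def by blast
  moreover have "\<bar>L1 t\<bar> \<le> 1" "0 \<le> L2 t \<and> L2 t \<le> c1" for t
    using L_bounds strictly_convex_second_derivative_nonneg[OF L_convex L1 L2, of t]
    by (auto simp: \<open>deriv L = L1\<close> \<open>deriv L1 = L2\<close> abs_le_iff)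
  ultimately have "convex_loss_regularizer L L1 L2 c1 R D1 D2"
    using strictly_convex_tangent_le[OF L_convex L1]
      strongly_convex_tangent_le[OF R_strong D1] strongly_convex_second_derivative_ge[OF R_strong D1 D2]
    by unfold_locales blast+
  then show ?thesis by (rule that)
qed

context convex_loss_regularizer
begin

definition "gradR f = (\<Sum>b\<in>Basis. D1 f b *\<^sub>R b)"
definition "hessR f v = (\<Sum>b\<in>Basis. D2 f v b *\<^sub>R b)"

lemma inner_gradR: "gradR f \<bullet> v = D1 f v"
  unfolding gradR_def by (rule inner_sum_Basis_blinfun)

lemma inner_hessR: "hessR f v \<bullet> w = D2 f v w"
  unfolding hessR_def by (rule inner_sum_Basis_blinfun)

lemma has_derivative_L_chain [derivative_intros]:
  "(h has_derivative h') (at z within s) \<Longrightarrow> ((\<lambda>w. L (h w)) has_derivative (\<lambda>v. L1 (h z) * h' v)) (at z within s)"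
  using has_derivative_compose[of h h' z s L "(*) (L1 (h z))"] L1[of "h z"]
  by (simp add: has_field_derivative_def)

lemma has_derivative_R_chain [derivative_intros]:
  "(h has_derivative h') (at z within s) \<Longrightarrow> ((\<lambda>w. R (h w)) has_derivative (\<lambda>v. D1 (h z) (h' v))) (at z within s)"
  using has_derivative_compose[of h h' z s R "D1 (h z)"] D1[of "h z"] by simp

lemma has_derivative_L1_chain [derivative_intros]:
  "(h has_derivative h') (at z within s) \<Longrightarrow> ((\<lambda>w. L1 (h w)) has_derivative (\<lambda>v. L2 (h z) * h' v)) (at z within s)"
  using has_derivative_compose[of h h' z s L1 "(*) (L2 (h z))"] L2[of "h z"]
  by (simp add: has_field_derivative_def)

lemma gradR_has_derivative: "(gradR has_derivative hessR f) (at f)"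
proof -
  have "((\<lambda>f. D1 f b) has_derivative (\<lambda>v. D2 f v b)) (at f)" for b
    using bounded_linear.has_derivative[OF blinfun.bounded_linear_left[of b] D2[of f]] .
  then have "((\<lambda>f. \<Sum>b\<in>Basis. D1 f b *\<^sub>R b) has_derivative (\<lambda>v. \<Sum>b\<in>Basis. D2 f v b *\<^sub>R b)) (at f)"
    by (intro has_derivative_sum has_derivative_scaleR_left) auto
  then show ?thesis unfolding gradR_def[abs_def] hessR_def[abs_def] .
qed

lemma has_derivative_gradR_chain [derivative_intros]:
  "(h has_derivative h') (at z within s) \<Longrightarrow> ((\<lambda>w. gradR (h w)) has_derivative (\<lambda>v. hessR (h z) (h' v))) (at z within s)"
  using has_derivative_compose[of h h' z s gradR "hessR (h z)"] gradR_has_derivative[of "h z"] by simp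

lemma linear_hessR: "linear (hessR f)"
  by (rule linearI) (simp_all add: hessR_def blinfun.add_right blinfun.add_left blinfun.scaleR_left
      blinfun.scaleR_right scaleR_add_left sum.distrib scaleR_sum_right)

lemma L2_measurable [measurable]: "L2 \<in> borel_measurable borel"
  by (rule borel_measurable_continuous_onI[OF L2_continuous])

lemma D2_measurable [measurable]: "D2 \<in> borel_measurable borel"
  by (rule borel_measurable_continuous_onI[OF D2_continuous])

lemma D2_apply_measurable [measurable]: "(\<lambda>f. blinfun_apply (blinfun_apply (D2 f) v) b) \<in> borel_measurable borel"
proof -
  have c: "continuous_on UNIV (\<lambda>T::'d \<Rightarrow>\<^sub>L ('d \<Rightarrow>\<^sub>L real). blinfun_apply (blinfun_apply T v) b)"
    by (intro continuous_intros)
  have "(\<lambda>T::'d \<Rightarrow>\<^sub>L ('d \<Rightarrow>\<^sub>L real). blinfun_apply (blinfun_apply T v) b) \<in> borel_measurable borel"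
    by (rule borel_measurable_continuous_onI[OF c])
  from measurable_compose[OF D2_measurable this] show ?thesis by (simp add: comp_def)
qed

end

section \<open>The perturbed minimiser\<close>

locale dual_perturbation = convex_loss_regularizer L L1 L2 c1 R D1 D2
  for L L1 L2 c1 and R :: "'d::euclidean_space \<Rightarrow> real" and D1 D2 +
  fixes CR \<rho> \<eta> \<Phi> :: real and B :: nat and Np :: "'n set"
    and lam fp :: 'd and fn :: "'n \<Rightarrow> 'd" and x :: "nat \<Rightarrow> 'd" and y :: "nat \<Rightarrow> real"
  assumes B_pos: "B \<ge> 1" and CR_pos: "CR > 0" and rho_pos: "\<rho> > 0"
    and regularization_pos: "\<rho> + \<Phi> + 2 * \<eta> * real (card Np) > 0"
    and data: "\<And>j. j < B \<Longrightarrow> norm (x j) \<le> 1 \<and> y j \<in> {-1, 1}"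
begin

definition "N = real (card Np)"
definition "\<kappa> = \<rho> + \<Phi> + 2 * \<eta> * N"
definition "anchor i = (1/2) *\<^sub>R (fp + fn i)"
definition "mu \<epsilon> = lam + (CR / (2 * real B)) *\<^sub>R \<epsilon>"
definition "obj \<epsilon> = objective L R CR B \<rho> \<eta> \<Phi> Np fp fn x y (mu \<epsilon>)"
definition "grad0 f = (CR / real B) *\<^sub>R (\<Sum>j<B. (L1 (y j * (f \<bullet> x j)) * y j) *\<^sub>R x j)
   + \<rho> *\<^sub>R gradR f + \<Phi> *\<^sub>R f + (2 * \<eta>) *\<^sub>R (\<Sum>i\<in>Np. f - anchor i) + 2 *\<^sub>R lam"
definition "grad \<epsilon> f = grad0 f + (CR / real B) *\<^sub>R \<epsilon>"
definition "noise_of f = (- (real B / CR)) *\<^sub>R grad0 f"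
definition "output \<epsilon> = arg_min (obj \<epsilon>) (\<lambda>_. True)"

lemma kappa_pos: "\<kappa> > 0"
  using regularization_pos by (simp add: \<kappa>_def N_def)

lemma B_gt_0: "real B > 0"
  using B_pos by simp

lemma inner_grad: "grad \<epsilon> f \<bullet> w = CR / real B * (\<Sum>j<B. L1 (y j * (f \<bullet> x j)) * (y j * (x j \<bullet> w)))
   + \<rho> * D1 f w + \<Phi> * (f \<bullet> w) + 2 * \<eta> * (\<Sum>i\<in>Np. (f - anchor i) \<bullet> w) + 2 * (lam \<bullet> w)
   + CR / real B * (\<epsilon> \<bullet> w)"
  by (simp add: grad_def grad0_def inner_add_left inner_sum_left inner_gradR sum_distrib_left mult_ac)

lemma obj_eq: "obj \<epsilon> f = CR / real B * (\<Sum>j<B. L (y j * (f \<bullet> x j))) + \<rho> * R f + 2 * (mu \<epsilon> \<bullet> f)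
     + \<Phi> / 2 * (norm f)\<^sup>2 + \<eta> * (\<Sum>i\<in>Np. (norm (f - anchor i))\<^sup>2)"
  by (simp add: obj_def objective_def anchor_def)

lemma loss_sum_tangent_le:
  "(\<Sum>j<B. L (y j * (f \<bullet> x j))) + (\<Sum>j<B. L1 (y j * (f \<bullet> x j)) * (y j * (x j \<bullet> (z - f))))
     \<le> (\<Sum>j<B. L (y j * (z \<bullet> x j)))"
  unfolding sum.distrib[symmetric]
proof (intro sum_mono)
  fix j
  show "L (y j * (f \<bullet> x j)) + L1 (y j * (f \<bullet> x j)) * (y j * (x j \<bullet> (z - f))) \<le> L (y j * (z \<bullet> x j))"
    using L_tangent_le[of "y j * (f \<bullet> x j)" "y j * (z \<bullet> x j)"]
    by (simp add: inner_diff_right inner_commute[of "x j" z] inner_commute[of "x j" f] algebra_simps)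
qed

lemma obj_quadratic_lower_bound:
  "obj \<epsilon> f + grad \<epsilon> f \<bullet> (z - f) + (\<kappa> / 2) * (norm (z - f))\<^sup>2 \<le> obj \<epsilon> z"
proof -
  define X where "X = (norm (z - f))\<^sup>2"
  have loss: "CR / real B * (\<Sum>j<B. L (y j * (f \<bullet> x j)))
        + CR / real B * (\<Sum>j<B. L1 (y j * (f \<bullet> x j)) * (y j * (x j \<bullet> (z - f))))
      \<le> CR / real B * (\<Sum>j<B. L (y j * (z \<bullet> x j)))"
    using mult_left_mono[OF loss_sum_tangent_le, of "CR / real B" f z] CR_pos B_gt_0
    by (simp add: distrib_left)
  have reg: "\<rho> * R f + \<rho> * D1 f (z - f) + \<rho> / 2 * X \<le> \<rho> * R z"
    using mult_left_mono[OF R_tangent_le[of f z], of \<rho>] rho_pos by (simp add: X_def algebra_simps)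
  have norm_term: "\<Phi> / 2 * (norm z)\<^sup>2 = \<Phi> / 2 * (norm f)\<^sup>2 + \<Phi> * (f \<bullet> (z - f)) + \<Phi> / 2 * X"
    by (simp add: X_def power2_norm_eq_inner inner_diff_left inner_diff_right inner_commute algebra_simps)
  have neighbour_terms: "\<eta> * (\<Sum>i\<in>Np. (norm (z - anchor i))\<^sup>2) = \<eta> * (\<Sum>i\<in>Np. (norm (f - anchor i))\<^sup>2)
      + 2 * \<eta> * (\<Sum>i\<in>Np. (f - anchor i) \<bullet> (z - f)) + \<eta> * N * X"
  proof -
    have "(norm (z - anchor i))\<^sup>2 = (norm (f - anchor i))\<^sup>2 + 2 * ((f - anchor i) \<bullet> (z - f)) + X" for i
      by (simp add: X_def power2_norm_eq_inner inner_diff_left inner_diff_right inner_commute algebra_simps)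
    then have "(\<Sum>i\<in>Np. (norm (z - anchor i))\<^sup>2) = (\<Sum>i\<in>Np. (norm (f - anchor i))\<^sup>2)
      + 2 * (\<Sum>i\<in>Np. (f - anchor i) \<bullet> (z - f)) + N * X"
      by (simp add: sum.distrib sum_distrib_left N_def)
    then show ?thesis by (simp add: algebra_simps)
  qed
  have dual_term: "2 * (mu \<epsilon> \<bullet> z) = 2 * (mu \<epsilon> \<bullet> f) + 2 * (lam \<bullet> (z - f)) + CR / real B * (\<epsilon> \<bullet> (z - f))"
    using B_gt_0 by (simp add: mu_def inner_add_left inner_diff_right algebra_simps)
  have \<kappa>: "\<kappa> / 2 * X = \<rho> / 2 * X + \<Phi> / 2 * X + \<eta> * N * X"
    by (simp add: \<kappa>_def algebra_simps)
  have G: "grad \<epsilon> f \<bullet> (z - f) = CR / real B * (\<Sum>j<B. L1 (y j * (f \<bullet> x j)) * (y j * (x j \<bullet> (z - f))))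
   + \<rho> * D1 f (z - f) + \<Phi> * (f \<bullet> (z - f)) + 2 * \<eta> * (\<Sum>i\<in>Np. (f - anchor i) \<bullet> (z - f)) + 2 * (lam \<bullet> (z - f))
   + CR / real B * (\<epsilon> \<bullet> (z - f))"
    by (rule inner_grad)
  show ?thesis
    unfolding obj_eq G X_def[symmetric] \<kappa> using loss reg norm_term neighbour_terms dual_term by linarith
qed

lemma grad_strongly_monotone: "\<kappa> * (norm (z - f))\<^sup>2 \<le> (grad \<epsilon> z - grad \<epsilon> f) \<bullet> (z - f)"
proof -
  have "(norm (f - z))\<^sup>2 = (norm (z - f))\<^sup>2" by (simp add: norm_minus_commute)
  moreover have "grad \<epsilon> z \<bullet> (f - z) = - (grad \<epsilon> z \<bullet> (z - f))" by (simp add: inner_diff_right)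
  ultimately show ?thesis
    using obj_quadratic_lower_bound[of \<epsilon> f z] obj_quadratic_lower_bound[of \<epsilon> z f] by (simp add: inner_diff_left)
qed

lemma obj_has_derivative: "(obj \<epsilon> has_derivative (\<lambda>w. grad \<epsilon> f \<bullet> w)) (at f)"
proof -
  have e: "obj \<epsilon> = (\<lambda>f. CR / real B * (\<Sum>j<B. L (y j * (f \<bullet> x j))) + \<rho> * R f + 2 * (mu \<epsilon> \<bullet> f)
     + \<Phi> / 2 * (f \<bullet> f) + \<eta> * (\<Sum>i\<in>Np. (f - anchor i) \<bullet> (f - anchor i)))"
    by (simp add: fun_eq_iff obj_eq power2_norm_eq_inner)
  show ?thesis unfolding e
    by (rule has_derivative_eq_rhs, (rule derivative_eq_intros refl | simp)+, rule ext, subst inner_grad)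
      (simp add: mu_def inner_add_left inner_commute sum.distrib sum_distrib_left sum_divide_distrib algebra_simps)
qed

lemma continuous_on_obj: "continuous_on UNIV (obj \<epsilon>)"
  by (meson continuous_at_imp_continuous_on has_derivative_continuous obj_has_derivative)

lemma obj_attains_min: "\<exists>f. \<forall>z. obj \<epsilon> f \<le> obj \<epsilon> z"
proof -
  define r where "r = 2 * norm (grad \<epsilon> 0) / \<kappa> + 1"
  have "0 \<le> 2 * norm (grad \<epsilon> 0) / \<kappa>" using kappa_pos by simp
  then have r0: "r > 0" unfolding r_def by linarith
  obtain f where f: "f \<in> cball 0 r" "\<And>z. z \<in> cball 0 r \<Longrightarrow> obj \<epsilon> f \<le> obj \<epsilon> z"
    using continuous_attains_inf[of "cball 0 r" "obj \<epsilon>"] r0 continuous_on_obj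
    by (metis compact_cball continuous_on_subset top_greatest cball_eq_empty not_less order_less_imp_le)
  have "obj \<epsilon> f \<le> obj \<epsilon> z" for z
  proof (cases "z \<in> cball 0 r")
    case True then show ?thesis using f by blast
  next
    case False
    then have nz: "norm z > r" by (simp add: dist_norm)
    have "norm (grad \<epsilon> 0) < \<kappa> / 2 * norm z"
    proof -
      have "2 * norm (grad \<epsilon> 0) / \<kappa> < norm z" using nz r_def by simp
      then show ?thesis using kappa_pos by (simp add: field_simps)
    qed
    then have "norm (grad \<epsilon> 0) * norm z \<le> \<kappa> / 2 * norm z * norm z"
      by (intro mult_right_mono) auto
    moreover have "- (norm (grad \<epsilon> 0) * norm z) \<le> grad \<epsilon> 0 \<bullet> z"
      using norm_cauchy_schwarz[of "- grad \<epsilon> 0" z] by simp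
    ultimately have "0 \<le> grad \<epsilon> 0 \<bullet> (z - 0) + (\<kappa> / 2) * (norm (z - 0))\<^sup>2"
      by (simp add: power2_eq_square algebra_simps)
    then have "obj \<epsilon> 0 \<le> obj \<epsilon> z" using obj_quadratic_lower_bound[of \<epsilon> 0 z] by linarith
    moreover have "obj \<epsilon> f \<le> obj \<epsilon> 0" using f(2)[of 0] r0 by simp
    ultimately show ?thesis by linarith
  qed
  then show ?thesis by blast
qed

lemma grad_eq_0_at_min:
  assumes "\<forall>z. obj \<epsilon> f \<le> obj \<epsilon> z"
  shows "grad \<epsilon> f = 0"
proof -
  have "(\<lambda>w. grad \<epsilon> f \<bullet> w) = (\<lambda>h. 0)"
    by (rule has_derivative_local_min[OF obj_has_derivative]) (use assms in auto)
  then have "grad \<epsilon> f \<bullet> grad \<epsilon> f = 0" by metis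
  then show ?thesis by simp
qed

lemma obj_strict_min_at_critical_point:
  assumes "grad \<epsilon> f = 0" "z \<noteq> f"
  shows "obj \<epsilon> f < obj \<epsilon> z"
proof -
  have "0 < (\<kappa> / 2) * (norm (z - f))\<^sup>2" using kappa_pos assms(2) by simp
  then show ?thesis using obj_quadratic_lower_bound[of \<epsilon> f z] assms(1) by simp
qed

lemma output_eq_critical_point:
  assumes "grad \<epsilon> f = 0"
  shows "output \<epsilon> = f"
proof -
  have isf: "is_arg_min (obj \<epsilon>) (\<lambda>_. True) f"
    using obj_strict_min_at_critical_point[OF assms] unfolding is_arg_min_def by (metis less_asym less_irrefl)
  have "\<And>z. is_arg_min (obj \<epsilon>) (\<lambda>_. True) z \<Longrightarrow> z = f"
    using obj_strict_min_at_critical_point[OF assms] by (auto simp: is_arg_min_def)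
  then show ?thesis unfolding output_def arg_min_def using isf by (rule some_equality[rotated])
qed

lemma grad_eq_0_iff_noise_of: "grad \<epsilon> f = 0 \<longleftrightarrow> noise_of f = \<epsilon>"
proof -
  have "grad \<epsilon> f = 0 \<longleftrightarrow> (CR / real B) *\<^sub>R \<epsilon> = - grad0 f" unfolding grad_def
    by (metis add.commute add_eq_0_iff)
  also have "\<dots> \<longleftrightarrow> \<epsilon> = (- (real B / CR)) *\<^sub>R grad0 f"
  proof
    assume h: "(CR / real B) *\<^sub>R \<epsilon> = - grad0 f"
    have "\<epsilon> = (real B / CR) *\<^sub>R ((CR / real B) *\<^sub>R \<epsilon>)" using CR_pos B_gt_0 by simp
    also have "\<dots> = (- (real B / CR)) *\<^sub>R grad0 f" unfolding h by simp
    finally show "\<epsilon> = (- (real B / CR)) *\<^sub>R grad0 f" .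
  next
    assume h: "\<epsilon> = (- (real B / CR)) *\<^sub>R grad0 f"
    show "(CR / real B) *\<^sub>R \<epsilon> = - grad0 f" unfolding h using CR_pos B_gt_0 by simp
  qed
  finally show ?thesis unfolding noise_of_def by auto
qed

lemma noise_of_output: "noise_of (output \<epsilon>) = \<epsilon>"
proof -
  obtain f where f: "\<forall>z. obj \<epsilon> f \<le> obj \<epsilon> z" using obj_attains_min by blast
  have gr: "grad \<epsilon> f = 0" by (rule grad_eq_0_at_min[OF f])
  then have "output \<epsilon> = f" by (rule output_eq_critical_point)
  then show ?thesis using gr grad_eq_0_iff_noise_of by simp
qed

lemma output_noise_of: "output (noise_of f) = f"
  by (rule output_eq_critical_point) (simp add: grad_eq_0_iff_noise_of)

lemma inj_noise_of: "inj noise_of"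
  by (metis output_noise_of injI)

lemma noise_of_expanding: "\<kappa> * real B / CR * norm (z - f) \<le> norm (noise_of z - noise_of f)"
proof -
  have "\<kappa> * (norm (z - f))\<^sup>2 \<le> (grad0 z - grad0 f) \<bullet> (z - f)"
    using grad_strongly_monotone[of z f 0] by (simp add: grad_def)
  also have "\<dots> \<le> norm (grad0 z - grad0 f) * norm (z - f)" by (rule norm_cauchy_schwarz)
  also have "norm (grad0 z - grad0 f) = CR / real B * norm (noise_of z - noise_of f)"
  proof -
    have "noise_of z - noise_of f = (- (real B / CR)) *\<^sub>R (grad0 z - grad0 f)" by (simp add: noise_of_def algebra_simps)
    then have "norm (noise_of z - noise_of f) = real B / CR * norm (grad0 z - grad0 f)" using CR_pos by simp
    then show ?thesis using CR_pos B_gt_0 by (simp add: field_simps)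
  qed
  finally have "\<kappa> * (norm (z - f))\<^sup>2 \<le> CR / real B * norm (noise_of z - noise_of f) * norm (z - f)" .
  then have "\<kappa> * norm (z - f) \<le> CR / real B * norm (noise_of z - noise_of f)"
    by (cases "norm (z - f) = 0") (auto simp: power2_eq_square mult.assoc[symmetric] intro: mult_right_le_imp_le)
  then show ?thesis using CR_pos B_gt_0 by (simp add: field_simps)
qed

lemma output_lipschitz: "norm (output e - output e') \<le> CR / (\<kappa> * real B) * norm (e - e')"
proof -
  have "\<kappa> * real B / CR * norm (output e - output e') \<le> norm (e - e')"
    using noise_of_expanding[of "output e" "output e'"] by (simp add: noise_of_output)
  then show ?thesis using CR_pos B_gt_0 kappa_pos by (simp add: field_simps)
qed

lemma continuous_on_output: "continuous_on UNIV output"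
  using output_lipschitz CR_pos B_gt_0 kappa_pos
  by (intro lipschitz_on_continuous_on[of "CR / (\<kappa> * real B)"] lipschitz_onI) (auto simp: dist_norm)

lemma output_measurable [measurable]: "output \<in> borel_measurable borel"
  by (rule borel_measurable_continuous_onI[OF continuous_on_output])

definition "noise_of_deriv f v = (- (real B / CR)) *\<^sub>R ((CR / real B) *\<^sub>R (\<Sum>j<B. (L2 (y j * (f \<bullet> x j)) * (y j * (v \<bullet> x j)) * y j) *\<^sub>R x j)
   + \<rho> *\<^sub>R hessR f v + \<Phi> *\<^sub>R v + (2 * \<eta>) *\<^sub>R (\<Sum>i\<in>Np. v))"

lemma noise_of_has_derivative: "(noise_of has_derivative noise_of_deriv f) (at f)"
proof -
  have e: "noise_of = (\<lambda>f. (- (real B / CR)) *\<^sub>R ((CR / real B) *\<^sub>R (\<Sum>j<B. (L1 (y j * (f \<bullet> x j)) * y j) *\<^sub>R x j)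
   + \<rho> *\<^sub>R gradR f + \<Phi> *\<^sub>R f + (2 * \<eta>) *\<^sub>R (\<Sum>i\<in>Np. f - anchor i) + 2 *\<^sub>R lam))"
    by (simp add: fun_eq_iff noise_of_def grad0_def)
  show ?thesis unfolding e
    by (rule has_derivative_eq_rhs, (rule derivative_eq_intros refl | simp)+) (simp add: fun_eq_iff noise_of_deriv_def)
qed

definition "jacobian_without k f v = (\<Sum>j\<in>{..<B}-{k}. (L2 (y j * (f \<bullet> x j)) * (x j \<bullet> v)) *\<^sub>R x j)
   + (real B / CR) *\<^sub>R (\<rho> *\<^sub>R hessR f v + (\<Phi> + 2 * \<eta> * N) *\<^sub>R v)"

lemma noise_of_deriv_split:
  assumes k: "k < B"
  shows "noise_of_deriv f v = (-1) *\<^sub>R (jacobian_without k f v + (L2 (y k * (f \<bullet> x k)) * (x k \<bullet> v)) *\<^sub>R x k)"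
proof -
  define S' where "S' = (\<Sum>j\<in>{..<B}-{k}. (L2 (y j * (f \<bullet> x j)) * (x j \<bullet> v)) *\<^sub>R x j)"
  define ax where "ax = (L2 (y k * (f \<bullet> x k)) * (x k \<bullet> v)) *\<^sub>R x k"
  define Z where "Z = \<rho> *\<^sub>R hessR f v + (\<Phi> + 2 * \<eta> * N) *\<^sub>R v"
  have "(\<Sum>j<B. (L2 (y j * (f \<bullet> x j)) * (y j * (v \<bullet> x j)) * y j) *\<^sub>R x j)
      = (\<Sum>j<B. (L2 (y j * (f \<bullet> x j)) * (x j \<bullet> v)) *\<^sub>R x j)"
    by (intro sum.cong refl) (use data in \<open>fastforce simp: inner_commute\<close>)
  also have "\<dots> = S' + ax"
    using k by (simp add: S'_def ax_def sum.remove[of "{..<B}" k] add.commute)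
  finally have data_part: "(\<Sum>j<B. (L2 (y j * (f \<bullet> x j)) * (y j * (v \<bullet> x j)) * y j) *\<^sub>R x j) = S' + ax" .
  have "\<rho> *\<^sub>R hessR f v + \<Phi> *\<^sub>R v + (2 * \<eta>) *\<^sub>R (\<Sum>i\<in>Np. v) = Z"
    by (simp add: Z_def N_def sum_constant_scaleR scaleR_add_left)
  then have "noise_of_deriv f v = (- (real B / CR)) *\<^sub>R ((CR / real B) *\<^sub>R (S' + ax) + Z)"
    unfolding noise_of_deriv_def data_part by (simp add: add.assoc)
  also have "\<dots> = - (S' + ax) + (- (real B / CR)) *\<^sub>R Z"
    using CR_pos B_gt_0 by (simp add: scaleR_add_right)
  also have "\<dots> = (-1) *\<^sub>R (jacobian_without k f v + ax)"
    by (simp add: jacobian_without_def S'_def[symmetric] Z_def[symmetric])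
  finally show ?thesis by (simp add: ax_def)
qed

lemma linear_jacobian_without: "linear (jacobian_without k f)"
  using linear_hessR[of f] unfolding jacobian_without_def[abs_def]
  by (intro linearI) (simp_all add: linear_add linear_scale inner_add_right scaleR_add_left scaleR_add_right
      sum.distrib scaleR_sum_right algebra_simps)

lemma jacobian_without_coercive: "real B / CR * \<kappa> * (norm v)\<^sup>2 \<le> v \<bullet> jacobian_without k f v"
proof -
  have t1: "0 \<le> v \<bullet> (\<Sum>j\<in>{..<B}-{k}. (L2 (y j * (f \<bullet> x j)) * (x j \<bullet> v)) *\<^sub>R x j)"
    unfolding inner_sum_right
  proof (intro sum_nonneg)
    fix j
    have c: "v \<bullet> x j = x j \<bullet> v" by (rule inner_commute)
    have E: "v \<bullet> ((L2 (y j * (f \<bullet> x j)) * (x j \<bullet> v)) *\<^sub>R x j) = L2 (y j * (f \<bullet> x j)) * ((x j \<bullet> v) * (x j \<bullet> v))"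
      by (simp add: c mult.assoc)
    show "0 \<le> v \<bullet> ((L2 (y j * (f \<bullet> x j)) * (x j \<bullet> v)) *\<^sub>R x j)"
      unfolding E by (rule mult_nonneg_nonneg) (use L2_bounds in auto)
  qed
  have "\<rho> * (norm v)\<^sup>2 \<le> \<rho> * D2 f v v" using D2_ge rho_pos by (simp add: mult_left_mono)
  then have "\<kappa> * (norm v)\<^sup>2 \<le> v \<bullet> (\<rho> *\<^sub>R hessR f v + (\<Phi> + 2 * \<eta> * N) *\<^sub>R v)"
  proof -
    have e: "v \<bullet> (\<rho> *\<^sub>R hessR f v + (\<Phi> + 2 * \<eta> * N) *\<^sub>R v) = \<rho> * D2 f v v + (\<Phi> + 2 * \<eta> * N) * (norm v)\<^sup>2"
      by (simp add: inner_add_right inner_commute[of v "hessR f v"] inner_hessR power2_norm_eq_inner)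
    have "\<kappa> * (norm v)\<^sup>2 = \<rho> * (norm v)\<^sup>2 + (\<Phi> + 2 * \<eta> * N) * (norm v)\<^sup>2" by (simp add: \<kappa>_def algebra_simps)
    then show ?thesis unfolding e using \<open>\<rho> * (norm v)\<^sup>2 \<le> \<rho> * D2 f v v\<close> by linarith
  qed
  then have "real B / CR * (\<kappa> * (norm v)\<^sup>2) \<le> real B / CR * (v \<bullet> (\<rho> *\<^sub>R hessR f v + (\<Phi> + 2 * \<eta> * N) *\<^sub>R v))"
    using CR_pos B_gt_0 by (intro mult_left_mono) auto
  moreover have "real B / CR * \<kappa> * (norm v)\<^sup>2 = real B / CR * (\<kappa> * (norm v)\<^sup>2)" by simp
  ultimately show ?thesis using t1 unfolding jacobian_without_def inner_add_right inner_scaleR_right by linarith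
qed

lemma continuous_on_noise_of: "continuous_on UNIV noise_of"
  by (meson continuous_at_imp_continuous_on has_derivative_continuous noise_of_has_derivative)

lemma noise_of_measurable [measurable]: "noise_of \<in> borel_measurable borel"
  by (rule borel_measurable_continuous_onI[OF continuous_on_noise_of])

lemma noise_of_deriv_inner_measurable [measurable]: "(\<lambda>f. noise_of_deriv f v \<bullet> w) \<in> borel_measurable borel"
  unfolding noise_of_deriv_def hessR_def by measurable

lemma euclidean_det_noise_of_deriv_measurable [measurable]: "(\<lambda>f. euclidean_det (noise_of_deriv f)) \<in> borel_measurable borel"
  unfolding euclidean_det_def coord_matrix_def det_def vec_lambda_beta by measurable

lemma vimage_output: "output -` A = noise_of ` A"
proof (intro equalityI subsetI)
  fix e assume "e \<in> output -` A"
  then show "e \<in> noise_of ` A" using noise_of_output[of e] by (metis image_eqI vimageD)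
next
  fix e assume "e \<in> noise_of ` A"
  then show "e \<in> output -` A" using output_noise_of by auto
qed

definition "output_density a f = noise_density a (noise_of f) * \<bar>euclidean_det (noise_of_deriv f)\<bar>"

lemma output_density_measurable [measurable]: "output_density a \<in> borel_measurable borel"
  unfolding output_density_def[abs_def] by measurable

lemma output_density_nonneg: "a > 0 \<Longrightarrow> 0 \<le> output_density a f"
  unfolding output_density_def using noise_density_pos[of a "noise_of f"] by simp

lemma distr_noise_output:
  assumes a: "a > 0"
  shows "distr (noise_measure a) lborel output = density lborel (\<lambda>f. ennreal (output_density a f))"
proof (rule measure_eqI)
  fix A assume "A \<in> sets (distr (noise_measure a) lborel output)"
  then have A: "A \<in> sets borel" by simp
  have output_A: "noise_of ` A \<in> sets borel"
    unfolding vimage_output[symmetric] using measurable_sets[OF output_measurable A] by simp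
  have "emeasure (distr (noise_measure a) lborel output) A = emeasure (noise_measure a) (noise_of ` A)"
    by (subst emeasure_distr) (simp_all add: A noise_measure_eq_density vimage_output)
  also have "\<dots> = (\<integral>\<^sup>+e. ennreal (indicator (noise_of ` A) e * noise_density a e) \<partial>lborel)"
    unfolding noise_measure_eq_density using output_A
    by (subst emeasure_density) (auto intro!: nn_integral_cong simp: indicator_def)
  also have "\<dots> = (\<integral>\<^sup>+f. ennreal (indicator A f * (\<bar>euclidean_det (noise_of_deriv f)\<bar> * noise_density a (noise_of f))) \<partial>lborel)"
    using noise_density_pos[OF a]
    by (intro nn_integral_image_change_of_variables[OF A output_A noise_of_has_derivative inj_noise_of
          noise_density_measurable _ nn_integral_noise_density_finite[OF a]]) (auto intro: less_imp_le)
  also have "\<dots> = emeasure (density lborel (\<lambda>f. ennreal (output_density a f))) A"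
    by (subst emeasure_density) (auto intro!: nn_integral_cong simp: A indicator_def output_density_def mult.commute)
  finally show "emeasure (distr (noise_measure a) lborel output) A
      = emeasure (density lborel (\<lambda>f. ennreal (output_density a f))) A" .
qed simp

lemma output_distribution_eq_density:
  assumes "\<Phi> = Phi \<alpha> c1 CR B \<rho> \<eta> (card Np)" and "a = alpha_hat \<alpha> c1 CR B \<rho> \<eta> (card Np)" and "a > 0"
  shows "output_distribution L R c1 \<alpha> CR B \<rho> \<eta> Np lam fp fn x y = density lborel (\<lambda>f. ennreal (output_density a f))"
proof -
  have "mechanism_output L R c1 \<alpha> CR B \<rho> \<eta> Np lam fp fn x y = output"
    unfolding output_def[abs_def] obj_def[abs_def] mu_def[abs_def]
    unfolding mechanism_output_def Let_def assms(1)[symmetric] ..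
  then show ?thesis
    unfolding output_distribution_def assms(2)[symmetric] using distr_noise_output[OF assms(3)] by simp
qed

end

section \<open>Neighbouring data sets\<close>

locale neighbouring_dual_perturbation =
  D: dual_perturbation L L1 L2 c1 R D1 D2 CR \<rho> \<eta> \<Phi> B Np lam fp fn x y +
  D': dual_perturbation L L1 L2 c1 R D1 D2 CR \<rho> \<eta> \<Phi> B Np lam fp fn x' y'
  for L L1 L2 c1 R D1 D2 CR \<rho> \<eta> \<Phi> B Np lam fp fn x y x' y' +
  fixes k :: nat
  assumes k_less: "k < B"
    and agree: "\<And>j. j < B \<Longrightarrow> j \<noteq> k \<Longrightarrow> x j = x' j \<and> y j = y' j"
begin

lemma norm_data_term_le:
  assumes "\<bar>s\<bar> = 1" and "norm u \<le> 1"
  shows "norm ((L1 t * s) *\<^sub>R u) \<le> 1"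
  using assms D.L1_bounded[of t] by (simp add: abs_mult) (metis mult_le_one abs_ge_zero norm_ge_zero)

lemma dist_noise_of_le: "norm (D.noise_of f - D'.noise_of f) \<le> 2"
proof -
  define T where "T = (\<lambda>j. (L1 (y j * (f \<bullet> x j)) * y j) *\<^sub>R x j)"
  define T' where "T' = (\<lambda>j. (L1 (y' j * (f \<bullet> x' j)) * y' j) *\<^sub>R x' j)"
  have "(\<Sum>j\<in>{..<B}-{k}. T j) = (\<Sum>j\<in>{..<B}-{k}. T' j)"
    by (rule sum.cong) (use agree in \<open>auto simp: T_def T'_def\<close>)
  then have sum_diff: "(\<Sum>j<B. T j) - (\<Sum>j<B. T' j) = T k - T' k"
    using k_less by (simp add: sum.remove[of "{..<B}" k])
  have "D.grad0 f - D'.grad0 f = (CR / real B) *\<^sub>R ((\<Sum>j<B. T j) - (\<Sum>j<B. T' j))"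
    by (simp add: D.grad0_def D'.grad0_def D.anchor_def D'.anchor_def T_def T'_def scaleR_diff_right)
  then have "D.grad0 f - D'.grad0 f = (CR / real B) *\<^sub>R (T k - T' k)"
    unfolding sum_diff .
  moreover have "D.noise_of f - D'.noise_of f = (- (real B / CR)) *\<^sub>R (D.grad0 f - D'.grad0 f)"
    by (simp add: D.noise_of_def D'.noise_of_def scaleR_diff_right)
  ultimately have "D.noise_of f - D'.noise_of f = T' k - T k"
    using D.CR_pos D.B_gt_0 by simp
  moreover have "norm (T k) \<le> 1"
    unfolding T_def using D.data[OF k_less] by (intro norm_data_term_le) auto
  moreover have "norm (T' k) \<le> 1"
    unfolding T'_def using D'.data[OF k_less] by (intro norm_data_term_le) auto
  ultimately show ?thesis
    by (metis norm_triangle_ineq4 add_mono one_add_one order_trans)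
qed

lemma jacobian_without_eq: "D.jacobian_without k f = D'.jacobian_without k f"
  unfolding D.jacobian_without_def[abs_def] D'.jacobian_without_def[abs_def] D.N_def D'.N_def
  by (intro ext arg_cong2[where f="(+)"] sum.cong refl) (use agree in auto)

lemma euclidean_det_noise_of_deriv_ratio:
  "euclidean_det (D'.noise_of_deriv f) \<noteq> 0"
  "\<bar>euclidean_det (D.noise_of_deriv f)\<bar>
     \<le> (1 + c1 * CR / (real B * (\<rho> + \<Phi> + 2 * \<eta> * real (card Np)))) * \<bar>euclidean_det (D'.noise_of_deriv f)\<bar>"
proof -
  define lam0 where "lam0 = real B / CR * D.\<kappa>"
  have lam0: "lam0 > 0" unfolding lam0_def using D.kappa_pos D.CR_pos D.B_gt_0 by simp
  have coercive: "\<And>v. lam0 * (norm v)\<^sup>2 \<le> v \<bullet> D.jacobian_without k f v"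
    unfolding lam0_def by (rule D.jacobian_without_coercive)
  have xk: "norm (x k) \<le> 1" using D.data[OF k_less] by blast
  note ratio = euclidean_det_rank_one_update_ratio[OF D.linear_jacobian_without coercive lam0,
      where a = "L2 (y k * (f \<bullet> x k))" and amax = c1 and a' = "L2 (y' k * (f \<bullet> x' k))"
        and u = "x k" and c = "-1" and u' = "x' k"]
  have split: "D.noise_of_deriv f = (\<lambda>v. (-1) *\<^sub>R (D.jacobian_without k f v + (L2 (y k * (f \<bullet> x k)) * (x k \<bullet> v)) *\<^sub>R x k))"
    "D'.noise_of_deriv f = (\<lambda>v. (-1) *\<^sub>R (D.jacobian_without k f v + (L2 (y' k * (f \<bullet> x' k)) * (x' k \<bullet> v)) *\<^sub>R x' k))"
    using D.noise_of_deriv_split[OF k_less] D'.noise_of_deriv_split[OF k_less] jacobian_without_eq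
    by (auto intro!: ext)
  have "c1 / lam0 = c1 * CR / (real B * (\<rho> + \<Phi> + 2 * \<eta> * real (card Np)))"
    unfolding lam0_def D.\<kappa>_def D.N_def using D.CR_pos by (simp add: field_simps)
  then show "euclidean_det (D'.noise_of_deriv f) \<noteq> 0"
    "\<bar>euclidean_det (D.noise_of_deriv f)\<bar>
      \<le> (1 + c1 * CR / (real B * (\<rho> + \<Phi> + 2 * \<eta> * real (card Np)))) * \<bar>euclidean_det (D'.noise_of_deriv f)\<bar>"
    unfolding split using ratio D.L2_bounds xk by simp_all
qed

lemma output_density_ratio:
  assumes a: "a > 0"
  shows "D'.output_density a f > 0"
    and "D.output_density a f
      \<le> exp a * (1 + c1 * CR / (real B * (\<rho> + \<Phi> + 2 * \<eta> * real (card Np)))) * D'.output_density a f"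
proof -
  have noise: "noise_density a (D.noise_of f) \<le> exp a * noise_density a (D'.noise_of f)"
    by (rule noise_density_le_shift[OF a dist_noise_of_le])
  have pos: "noise_density a (D'.noise_of f) > 0" by (rule noise_density_pos[OF a])
  show "D'.output_density a f > 0"
    unfolding D'.output_density_def using pos euclidean_det_noise_of_deriv_ratio(1) by simp
  show "D.output_density a f
      \<le> exp a * (1 + c1 * CR / (real B * (\<rho> + \<Phi> + 2 * \<eta> * real (card Np)))) * D'.output_density a f"
    unfolding D.output_density_def D'.output_density_def
    using mult_mono[OF noise euclidean_det_noise_of_deriv_ratio(2)] pos a
    by (simp add: mult_ac)
qed

end

lemma alpha_hat_Phi_budget:
  fixes B n :: nat
  assumes \<alpha>: "\<alpha> > 0" and c1: "c1 > 0" and CR: "CR > 0" and B: "B \<ge> 1" and \<rho>: "\<rho> > 0" and \<eta>: "\<eta> > 0"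
  defines "\<Phi> \<equiv> Phi \<alpha> c1 CR B \<rho> \<eta> n" and "a \<equiv> alpha_hat \<alpha> c1 CR B \<rho> \<eta> n"
  shows "a > 0" and "\<rho> + \<Phi> + 2 * \<eta> * real n > 0"
    and "exp a * (1 + c1 * CR / (real B * (\<rho> + \<Phi> + 2 * \<eta> * real n))) \<le> exp \<alpha>"
proof -
  have B_pos: "real B > 0" using B by simp
  have "a > 0 \<and> \<rho> + \<Phi> + 2 * \<eta> * real n > 0 \<and>
    exp a * (1 + c1 * CR / (real B * (\<rho> + \<Phi> + 2 * \<eta> * real n))) \<le> exp \<alpha>"
  proof (cases "alpha_hat0 \<alpha> c1 CR B \<rho> \<eta> n > 0")
    case True
    define X where "X = c1 * CR / (real B * (\<rho> + 2 * \<eta> * real n))"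
    have X: "X > 0" unfolding X_def using c1 CR B_pos \<rho> \<eta> by (simp add: add_pos_nonneg)
    have a: "a = \<alpha> - 2 * ln (1 + X)" and \<Phi>: "\<Phi> = 0"
      using True by (simp_all add: a_def alpha_hat_def \<Phi>_def Phi_def alpha_hat0_def X_def)
    have "2 * ln (1 + X) = ln ((1 + X)\<^sup>2)" using X by (simp add: ln_realpow)
    then have "exp (2 * ln (1 + X)) = (1 + X)\<^sup>2" using X by simp
    then have "exp a * (1 + X) = exp \<alpha> / (1 + X)"
      using X by (simp add: a exp_diff power2_eq_square)
    also have "\<dots> \<le> exp \<alpha>" using X by (simp add: divide_le_eq)
    finally show ?thesis
      using True \<rho> \<eta> by (simp add: a_def alpha_hat_def \<Phi> X_def add_pos_nonneg)
  next
    case False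
    define Y where "Y = c1 * CR / (real B * (exp (\<alpha> / 4) - 1))"
    have e4: "exp (\<alpha> / 4) > 1" using \<alpha> by simp
    have Y: "Y > 0" unfolding Y_def using c1 CR B_pos e4 by simp
    have a: "a = \<alpha> / 2" and \<kappa>: "\<rho> + \<Phi> + 2 * \<eta> * real n = Y"
      using False by (simp_all add: a_def alpha_hat_def \<Phi>_def Phi_def Y_def)
    have "c1 * CR / (real B * Y) = exp (\<alpha> / 4) - 1"
      unfolding Y_def using c1 CR B_pos e4 by (simp add: field_simps)
    then have "exp a * (1 + c1 * CR / (real B * (\<rho> + \<Phi> + 2 * \<eta> * real n))) = exp (\<alpha> / 2) * exp (\<alpha> / 4)"
      by (simp add: \<kappa> a)
    also have "\<dots> = exp (3 * \<alpha> / 4)" by (simp add: exp_add[symmetric])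
    also have "\<dots> \<le> exp \<alpha>" using \<alpha> by simp
    finally show ?thesis using Y \<alpha> by (simp add: \<kappa> a)
  qed
  then show "a > 0" "\<rho> + \<Phi> + 2 * \<eta> * real n > 0"
    "exp a * (1 + c1 * CR / (real B * (\<rho> + \<Phi> + 2 * \<eta> * real n))) \<le> exp \<alpha>" by auto
qed

theorem theorem1:
  fixes L :: "real \<Rightarrow> real" and R :: "'d::euclidean_space \<Rightarrow> real"
    and c1 \<alpha> CR \<rho> \<eta> :: real and B :: nat and Np :: "'n set"
    and lam fp :: 'd and fn :: "'n \<Rightarrow> 'd"
    and x x' :: "nat \<Rightarrow> 'd" and y y' :: "nat \<Rightarrow> real"
  assumes L_convex: "strictly_convex L" and L_C2: "C2_real L"
    and L_bounds: "\<forall>t. \<bar>deriv L t\<bar> \<le> 1 \<and> \<bar>deriv (deriv L) t\<bar> \<le> c1" and c1_pos: "c1 > 0"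
    and R_C2: "C2_fun R" and R_strong: "strongly_convex 1 R"
    and Np_fin: "finite Np" and Np_ne: "card Np \<ge> 1"
    and B_pos: "B \<ge> 1" and CR_pos: "CR > 0" and rho_pos: "\<rho> > 0" and eta_pos: "\<eta> > 0"
    and alpha_pos: "\<alpha> > 0"
    and data: "\<forall>j<B. norm (x j) \<le> 1 \<and> y j \<in> {-1, 1}"
    and data': "\<forall>j<B. norm (x' j) \<le> 1 \<and> y' j \<in> {-1, 1}"
    and nb: "neighboring B x y x' y'"
  shows "\<exists>Q Q'. Q \<in> borel_measurable lborel \<and> Q' \<in> borel_measurable lborel
     \<and> output_distribution L R c1 \<alpha> CR B \<rho> \<eta> Np lam fp fn x y = density lborel (\<lambda>f. ennreal (Q f))
     \<and> output_distribution L R c1 \<alpha> CR B \<rho> \<eta> Np lam fp fn x' y' = density lborel (\<lambda>f. ennreal (Q' f))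
     \<and> (\<forall>f. Q f \<ge> 0 \<and> Q' f > 0 \<and> Q f / Q' f \<le> exp \<alpha>)"
proof -
  obtain L1 L2 D1 D2 where smooth: "convex_loss_regularizer L L1 L2 c1 R D1 D2"
    using convex_loss_regularizerI[OF L_convex L_C2 L_bounds R_C2 R_strong] .
  define \<Phi> where "\<Phi> = Phi \<alpha> c1 CR B \<rho> \<eta> (card Np)"
  define a where "a = alpha_hat \<alpha> c1 CR B \<rho> \<eta> (card Np)"
  note budget = alpha_hat_Phi_budget[OF alpha_pos c1_pos CR_pos B_pos rho_pos eta_pos, of "card Np",
      folded \<Phi>_def a_def]
  obtain k where k: "{j. j < B \<and> (x j, y j) \<noteq> (x' j, y' j)} = {k}"
    using nb unfolding neighboring_def by (meson card_1_singletonE)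
  interpret neighbouring_dual_perturbation L L1 L2 c1 R D1 D2 CR \<rho> \<eta> \<Phi> B Np lam fp fn x y x' y' k
    using smooth budget(2) k data data' B_pos CR_pos rho_pos
    by (intro neighbouring_dual_perturbation.intro dual_perturbation.intro dual_perturbation_axioms.intro
        neighbouring_dual_perturbation_axioms.intro) auto
  have ratio: "D.output_density a f / D'.output_density a f \<le> exp \<alpha>" for f
    using output_density_ratio[OF budget(1), of f] budget(3)
    by (simp add: divide_le_eq) (meson order_trans mult_right_mono less_imp_le)
  show ?thesis
    using D.output_distribution_eq_density[OF \<Phi>_def a_def budget(1)]
      D'.output_distribution_eq_density[OF \<Phi>_def a_def budget(1)]
      D.output_density_measurable D'.output_density_measurable
      D.output_density_nonneg[OF budget(1)] output_density_ratio(1)[OF budget(1)] ratio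
    by (intro exI[of _ "D.output_density a"] exI[of _ "D'.output_density a"]) simp
qed

end
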